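(* Let $\Sigma\subset\mathbf{R}^{n+1}$ be a translating soliton with translation vector $T$, let $V$ be the tangential part of $T$ along $\Sigma$, and let $u:\Sigma\to\mathbf{S}^n$ be its Gauss map, which satisfies $\tau(u)=-du(V)$. Then $$\Delta|\nabla u|^2=2|\nabla du|^2-2|\nabla u|^4-\langle V,\nabla|\nabla u|^2\rangle .$$
   Context: $\Sigma$ is a smooth immersed $n$-dimensional hypersurface ($n\ge2$) in $\mathbf{R}^{n+1}$ with induced metric $g$, outer unit normal $\vec\nu$, and mean curvature $H$ with respect to $\vec\nu$ (mean curvature vector $-H\vec\nu$). It is a translating soliton with translation vector $T$ (a constant vector in $\mathbf{R}^{n+1}$) if $\langle T,\vec\nu\rangle=-H$ on $\Sigma$. The Gauss map is $u(p)=\vec\nu(p)\in\mathbf{S}^n$ (round unit sphere). $\nabla$, $\Delta$ denote gradient/connection and Laplacian on $\Sigma$ with respect to $g$ (with the induced connection on $u^{-1}T\mathbf{S}^n$), $|\nabla u|^2$ is the energy density of $u$, $\nabla du$ is the second fundamental form of the map $u$, and $\tau(u)=\mathrm{Tr}_g\nabla du$ is its tension field. *)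

theory Defs
  imports "HOL-Analysis.Analysis"
begin

text \<open>Local-coordinate setting: an immersion X of an open set U of R^n into R^(n+1)
 (index types 'n and 'm), with unit normal field nu. All geometric quantities are written
 in coordinates.\<close>

definition pd :: "'n::finite \<Rightarrow> (real^'n \<Rightarrow> 'a::real_normed_vector) \<Rightarrow> real^'n \<Rightarrow> 'a" where
  "pd i f x = frechet_derivative f (at x) (axis i 1)"

fun pdl :: "'n::finite list \<Rightarrow> (real^'n \<Rightarrow> 'a::real_normed_vector) \<Rightarrow> real^'n \<Rightarrow> 'a" where
  "pdl [] f = f"
| "pdl (i # is) f = pd i (pdl is f)"

definition smooth_on :: "(real^'n::finite) set \<Rightarrow> (real^'n \<Rightarrow> 'a::real_normed_vector) \<Rightarrow> bool" where
  "smooth_on U f \<longleftrightarrow> (\<forall>is. pdl is f differentiable_on U)"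

definition metric :: "(real^'n::finite \<Rightarrow> real^'m::finite) \<Rightarrow> real^'n \<Rightarrow> 'n \<Rightarrow> 'n \<Rightarrow> real" where
  "metric X p i j = pd i X p \<bullet> pd j X p"

definition ginv :: "(real^'n::finite \<Rightarrow> real^'m::finite) \<Rightarrow> real^'n \<Rightarrow> 'n \<Rightarrow> 'n \<Rightarrow> real" where
  "ginv X p i j = matrix_inv (\<chi> a b. metric X p a b) $ i $ j"

definition christoffel :: "(real^'n::finite \<Rightarrow> real^'m::finite) \<Rightarrow> real^'n \<Rightarrow> 'n \<Rightarrow> 'n \<Rightarrow> 'n \<Rightarrow> real" where
  "christoffel X p k i j = (\<Sum>l\<in>UNIV. ginv X p k l * (pd i (pd j X) p \<bullet> pd l X p))"

definition hess_fun :: "(real^'n::finite \<Rightarrow> real^'m::finite) \<Rightarrow> (real^'n \<Rightarrow> real) \<Rightarrow> real^'n \<Rightarrow> 'n \<Rightarrow> 'n \<Rightarrow> real" where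
  "hess_fun X f p i j = pd i (pd j f) p - (\<Sum>k\<in>UNIV. christoffel X p k i j * pd k f p)"

definition laplacian :: "(real^'n::finite \<Rightarrow> real^'m::finite) \<Rightarrow> (real^'n \<Rightarrow> real) \<Rightarrow> real^'n \<Rightarrow> real" where
  "laplacian X f p = (\<Sum>i\<in>UNIV. \<Sum>j\<in>UNIV. ginv X p i j * hess_fun X f p i j)"

text \<open>Mean curvature with respect to nu (mean curvature vector -H nu): H = div_Sigma nu.\<close>
definition mean_curv :: "(real^'n::finite \<Rightarrow> real^'m::finite) \<Rightarrow> (real^'n \<Rightarrow> real^'m) \<Rightarrow> real^'n \<Rightarrow> real" where
  "mean_curv X nu p = (\<Sum>i\<in>UNIV. \<Sum>j\<in>UNIV. ginv X p i j * (pd i nu p \<bullet> pd j X p))"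

definition energy_density :: "(real^'n::finite \<Rightarrow> real^'m::finite) \<Rightarrow> (real^'n \<Rightarrow> real^'m) \<Rightarrow> real^'n \<Rightarrow> real" where
  "energy_density X u p = (\<Sum>i\<in>UNIV. \<Sum>j\<in>UNIV. ginv X p i j * (pd i u p \<bullet> pd j u p))"

text \<open>Second fundamental form (nabla du)(d_i, d_j) of a map u into S^n subset R^(n+1):
 tangential projection (onto T_{u(p)} S^n = u(p)^perp) of the ambient second derivative,
 minus du of the Levi-Civita connection.\<close>
definition sff_map :: "(real^'n::finite \<Rightarrow> real^'m::finite) \<Rightarrow> (real^'n \<Rightarrow> real^'m) \<Rightarrow> real^'n \<Rightarrow> 'n \<Rightarrow> 'n \<Rightarrow> real^'m" where
  "sff_map X u p i j =
     (let w = pd i (pd j u) p in w - (w \<bullet> u p) *\<^sub>R u p)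
     - (\<Sum>k\<in>UNIV. christoffel X p k i j *\<^sub>R pd k u p)"

definition sff_map_norm2 :: "(real^'n::finite \<Rightarrow> real^'m::finite) \<Rightarrow> (real^'n \<Rightarrow> real^'m) \<Rightarrow> real^'n \<Rightarrow> real" where
  "sff_map_norm2 X u p = (\<Sum>i\<in>UNIV. \<Sum>j\<in>UNIV. \<Sum>k\<in>UNIV. \<Sum>l\<in>UNIV.
      ginv X p i k * ginv X p j l * (sff_map X u p i j \<bullet> sff_map X u p k l))"

definition tangential_part :: "(real^'n::finite \<Rightarrow> real^'m::finite) \<Rightarrow> real^'m \<Rightarrow> real^'n \<Rightarrow> real^'m" where
  "tangential_part X T p = (\<Sum>k\<in>UNIV. \<Sum>l\<in>UNIV. (ginv X p k l * (T \<bullet> pd k X p)) *\<^sub>R pd l X p)"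

definition grad_fun :: "(real^'n::finite \<Rightarrow> real^'m::finite) \<Rightarrow> (real^'n \<Rightarrow> real) \<Rightarrow> real^'n \<Rightarrow> real^'m" where
  "grad_fun X f p = (\<Sum>i\<in>UNIV. \<Sum>j\<in>UNIV. (ginv X p i j * pd j f p) *\<^sub>R pd i X p)"

end

theory Submission
  imports Defs
begin

text \<open>Everything is computed in the coordinates of \<open>\<real>\<^sup>n\<^sup>+\<^sup>1\<close>. For a function \<open>f\<close> on \<open>\<Sigma>\<close> let \<open>\<delta>\<^sub>a f\<close> be
  the \<open>a\<close>-th component of its gradient and put \<open>A\<^sub>a\<^sub>b = \<delta>\<^sub>a \<nu>\<^sub>b\<close>, so that \<open>|\<nabla>u|\<^sup>2 = |A|\<^sup>2\<close> and
  \<open>H = tr A\<close>. The Gauss formula \<open>\<delta>\<^sub>a\<delta>\<^sub>b f = Hess f(a,b) - \<nu>\<^sub>b A\<^sub>a\<^sub>c \<delta>\<^sub>c f\<close> gives the commutator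
  of the \<open>\<delta>\<close>'s, hence the Codazzi equation for \<open>\<delta>A\<close>, and shows
  \<open>\<nabla>du = \<delta>A + \<nu> \<otimes> A\<^sup>2 + A\<^sup>2 \<otimes> \<nu>\<close>, so \<open>|\<nabla>du|\<^sup>2 = |\<delta>A|\<^sup>2 - 2|A\<^sup>2|\<^sup>2\<close>. Differentiating the soliton
  equation gives \<open>\<delta>H = -\<langle>T, \<delta>\<nu>\<rangle>\<close>, and contracting \<open>\<delta>\<delta>|A|\<^sup>2\<close> with Codazzi yields the Simons-type
  identity \<open>\<Delta>|A|\<^sup>2 = 2|\<delta>A|\<^sup>2 - \<langle>T, \<delta>|A|\<^sup>2\<rangle> - 2|A|\<^sup>4 - 4|A\<^sup>2|\<^sup>2\<close>; substituting
  \<open>|\<nabla>du|\<^sup>2\<close>, the two \<open>|A\<^sup>2|\<^sup>2\<close> terms cancel.\<close>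

lemma pd_cong_open:
  assumes "open U" "x \<in> U" "\<forall>y\<in>U. f y = g y"
  shows "pd i f x = pd i g x"
proof -
  have "(f has_derivative D) (at x) \<longleftrightarrow> (g has_derivative D) (at x)" for D
    using has_derivative_transform_within_open[OF _ assms(1,2)] assms(3) by metis
  then show ?thesis unfolding pd_def frechet_derivative_def by simp
qed

lemma pdl_cong_open:
  assumes "open U" "\<forall>y\<in>U. f y = g y"
  shows "\<forall>x\<in>U. pdl is f x = pdl is g x"
  using assms by (induction "is") (auto intro: pd_cong_open)

lemma differentiable_on_cong_open:
  assumes "open U" "\<forall>y\<in>U. f y = g y" "f differentiable_on U"
  shows "g differentiable_on U"
  using assms unfolding differentiable_on_eq_differentiable_at[OF assms(1)] differentiable_def
  by (meson has_derivative_transform_within_open)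

lemma pd_eq_has_derivative:
  assumes "(f has_derivative D) (at x)"
  shows "pd i f x = D (axis i 1)"
  using frechet_derivative_at[OF assms] unfolding pd_def by simp

lemma pdl_append_single: "pdl (is @ [i]) f = pdl is (pd i f)"
  by (induction "is") auto

lemma pd_add:
  assumes "f differentiable at x" "g differentiable at x"
  shows "pd i (\<lambda>y. f y + g y) x = pd i f x + pd i g x"
  using pd_eq_has_derivative[OF has_derivative_add[OF assms[unfolded frechet_derivative_works]]]
  by (simp add: pd_def)

lemma pd_minus:
  assumes "f differentiable at x"
  shows "pd i (\<lambda>y. - f y) x = - pd i f x"
  using pd_eq_has_derivative[OF has_derivative_minus[OF assms[unfolded frechet_derivative_works]]]
  by (simp add: pd_def)

lemma pd_diff:
  assumes "f differentiable at x" "g differentiable at x"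
  shows "pd i (\<lambda>y. f y - g y) x = pd i f x - pd i g x"
  using pd_eq_has_derivative[OF has_derivative_diff[OF assms[unfolded frechet_derivative_works]]]
  by (simp add: pd_def)

lemma pd_const [simp]: "pd i (\<lambda>y. c) x = 0"
  by (simp add: pd_def)

lemma pd_sum:
  assumes "finite I" "\<And>k. k \<in> I \<Longrightarrow> f k differentiable at x"
  shows "pd i (\<lambda>y. \<Sum>k\<in>I. f k y) x = (\<Sum>k\<in>I. pd i (f k) x)"
  using pd_eq_has_derivative[OF has_derivative_sum[OF assms(2)[unfolded frechet_derivative_works]]]
  by (simp add: pd_def)

lemma pd_bilinear:
  assumes "bounded_bilinear bil" "f differentiable at x" "g differentiable at x"
  shows "pd i (\<lambda>y. bil (f y) (g y)) x = bil (pd i f x) (g x) + bil (f x) (pd i g x)"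
  using pd_eq_has_derivative[OF bounded_bilinear.FDERIV[OF assms(1)
        assms(2,3)[unfolded frechet_derivative_works]]]
  by (simp add: pd_def add.commute)

lemmas pd_mult = pd_bilinear[OF bounded_bilinear_mult]
lemmas pd_inner = pd_bilinear[OF bounded_bilinear_inner]

lemma pd_component:
  fixes f :: "real^'n::finite \<Rightarrow> real^'m::finite"
  assumes "f differentiable at x"
  shows "pd i (\<lambda>y. f y $ a) x = pd i f x $ a"
  using pd_inner[OF assms differentiable_const, of i "axis a 1"] by (simp add: inner_axis)

lemma pd_inverse:
  fixes f :: "real^'n::finite \<Rightarrow> real"
  assumes "f differentiable at x" "f x \<noteq> 0"
  shows "pd i (\<lambda>y. inverse (f y)) x = - (pd i f x * inverse (f x) * inverse (f x))"
  using pd_eq_has_derivative[OF Deriv.has_derivative_inverse[OF assms(2)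
        assms(1)[unfolded frechet_derivative_works]]]
  by (simp add: pd_def)

text \<open>Closure properties of \<open>smooth_on\<close> are proved through the finite-order version
  \<open>smooth_upto\<close>, by induction on the order.\<close>
definition smooth_upto ::
    "nat \<Rightarrow> (real^'n::finite) set \<Rightarrow> (real^'n \<Rightarrow> 'a::real_normed_vector) \<Rightarrow> bool" where
  "smooth_upto n U f \<longleftrightarrow> (\<forall>is. length is \<le> n \<longrightarrow> pdl is f differentiable_on U)"

lemma smooth_upto_0: "smooth_upto 0 U f \<longleftrightarrow> f differentiable_on U"
  unfolding smooth_upto_def by auto

lemma smooth_upto_Suc:
  "smooth_upto (Suc n) U f \<longleftrightarrow> f differentiable_on U \<and> (\<forall>i. smooth_upto n U (pd i f))"
proof
  assume f: "smooth_upto (Suc n) U f"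
  show "f differentiable_on U \<and> (\<forall>i. smooth_upto n U (pd i f))"
    unfolding smooth_upto_def
  proof (intro conjI allI impI)
    show "f differentiable_on U" using f[unfolded smooth_upto_def, rule_format, of "[]"] by simp
    fix i and "is" :: "'a list" assume "length is \<le> n"
    then show "pdl is (pd i f) differentiable_on U"
      using f[unfolded smooth_upto_def, rule_format, of "is @ [i]"] by (simp add: pdl_append_single)
  qed
next
  assume f: "f differentiable_on U \<and> (\<forall>i. smooth_upto n U (pd i f))"
  show "smooth_upto (Suc n) U f" unfolding smooth_upto_def
  proof (intro allI impI)
    fix "is" :: "'a list" assume l: "length is \<le> Suc n"
    show "pdl is f differentiable_on U"
    proof (cases "is" rule: rev_cases)
      case Nil then show ?thesis using f by simp
    next
      case (snoc js i)
      with l f show ?thesis by (simp add: smooth_upto_def pdl_append_single)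
    qed
  qed
qed

lemma smooth_upto_mono: "smooth_upto n U f \<Longrightarrow> m \<le> n \<Longrightarrow> smooth_upto m U f"
  unfolding smooth_upto_def by auto

lemma smooth_on_iff_smooth_upto: "smooth_on U f \<longleftrightarrow> (\<forall>n. smooth_upto n U f)"
  unfolding smooth_on_def smooth_upto_def by auto

lemma smooth_upto_differentiable_on: "smooth_upto n U f \<Longrightarrow> f differentiable_on U"
  using smooth_upto_mono smooth_upto_0 by blast

lemma smooth_upto_pd: "smooth_upto (Suc n) U f \<Longrightarrow> smooth_upto n U (pd i f)"
  unfolding smooth_upto_Suc by simp

lemma smooth_on_pd: "smooth_on U f \<Longrightarrow> smooth_on U (pd i f)"
  unfolding smooth_on_iff_smooth_upto using smooth_upto_pd by blast

lemma smooth_upto_const: "smooth_upto n U (\<lambda>x. c)"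
proof (induction n arbitrary: c)
  case (Suc n)
  have pd_c: "pd i (\<lambda>x. c) = (\<lambda>x. 0)" for i
    by (simp add: fun_eq_iff)
  show ?case
    using Suc.IH[of 0] by (simp add: smooth_upto_Suc pd_c)
qed (simp add: smooth_upto_0)

lemma differentiable_on_bilinear:
  assumes "bounded_bilinear bil" "f differentiable_on S" "g differentiable_on S"
  shows "(\<lambda>x. bil (f x) (g x)) differentiable_on S"
  using assms(2,3) bounded_bilinear.FDERIV[OF assms(1)] unfolding differentiable_on_def differentiable_def
  by blast

context
  fixes U :: "(real^'n::finite) set"
  assumes U: "open U"
begin

lemma smooth_upto_differentiable_at: "smooth_upto n U f \<Longrightarrow> x \<in> U \<Longrightarrow> f differentiable at x"
  using smooth_upto_differentiable_on differentiable_on_eq_differentiable_at[OF U] by blast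

lemma smooth_upto_cong:
  assumes "\<forall>y\<in>U. f y = g y" "smooth_upto n U f"
  shows "smooth_upto n U g"
  using assms differentiable_on_cong_open[OF U pdl_cong_open[OF U]]
  unfolding smooth_upto_def by blast

lemma smooth_upto_add: "smooth_upto n U f \<Longrightarrow> smooth_upto n U g \<Longrightarrow> smooth_upto n U (\<lambda>x. f x + g x)"
proof (induction n arbitrary: f g)
  case 0 then show ?case by (simp add: smooth_upto_0 differentiable_on_add)
next
  case (Suc n)
  have "smooth_upto n U (pd i (\<lambda>x. f x + g x))" for i
    by (rule smooth_upto_cong[OF _ Suc.IH[OF smooth_upto_pd[OF Suc.prems(1), of i]
            smooth_upto_pd[OF Suc.prems(2), of i]]])
      (use smooth_upto_differentiable_at[OF Suc.prems(1)] smooth_upto_differentiable_at[OF Suc.prems(2)]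
        in \<open>simp add: pd_add\<close>)
  with Suc.prems show ?case
    by (simp add: smooth_upto_Suc smooth_upto_differentiable_on differentiable_on_add)
qed

lemma smooth_upto_minus: "smooth_upto n U f \<Longrightarrow> smooth_upto n U (\<lambda>x. - f x)"
proof (induction n arbitrary: f)
  case 0 then show ?case by (simp add: smooth_upto_0 differentiable_on_minus)
next
  case (Suc n)
  have "smooth_upto n U (pd i (\<lambda>x. - f x))" for i
    by (rule smooth_upto_cong[OF _ Suc.IH[OF smooth_upto_pd[OF Suc.prems, of i]]])
      (use smooth_upto_differentiable_at[OF Suc.prems] in \<open>simp add: pd_minus\<close>)
  with Suc.prems show ?case
    by (simp add: smooth_upto_Suc smooth_upto_differentiable_on differentiable_on_minus)
qed

lemma smooth_upto_sum:
  "finite I \<Longrightarrow> (\<And>k. k \<in> I \<Longrightarrow> smooth_upto n U (f k)) \<Longrightarrow> smooth_upto n U (\<lambda>x. \<Sum>k\<in>I. f k x)"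
  by (induction I rule: finite_induct) (simp_all add: smooth_upto_const smooth_upto_add)

lemma smooth_upto_bilinear:
  assumes bil: "bounded_bilinear bil"
  shows "smooth_upto n U f \<Longrightarrow> smooth_upto n U g \<Longrightarrow> smooth_upto n U (\<lambda>x. bil (f x) (g x))"
proof (induction n arbitrary: f g)
  case 0
  then show ?case
    by (simp add: smooth_upto_0 differentiable_on_bilinear[OF bil])
next
  case (Suc n)
  have f: "smooth_upto n U f" and g: "smooth_upto n U g"
    using Suc.prems smooth_upto_mono[of "Suc n" U _ n] by auto
  have "smooth_upto n U (pd i (\<lambda>x. bil (f x) (g x)))" for i
    by (rule smooth_upto_cong[OF _ smooth_upto_add[OF Suc.IH[OF smooth_upto_pd[OF Suc.prems(1), of i] g]
            Suc.IH[OF f smooth_upto_pd[OF Suc.prems(2), of i]]]])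
      (use smooth_upto_differentiable_at[OF Suc.prems(1)] smooth_upto_differentiable_at[OF Suc.prems(2)]
        in \<open>simp add: pd_bilinear[OF bil]\<close>)
  with Suc.IH[OF f g] show ?case
    by (simp add: smooth_upto_Suc smooth_upto_differentiable_on)
qed

lemmas smooth_upto_mult = smooth_upto_bilinear[OF bounded_bilinear_mult]
lemmas smooth_upto_scaleR = smooth_upto_bilinear[OF bounded_bilinear_scaleR]
lemmas smooth_upto_inner = smooth_upto_bilinear[OF bounded_bilinear_inner]

lemma smooth_upto_prod:
  fixes f :: "'k \<Rightarrow> real^'n \<Rightarrow> real"
  shows "finite I \<Longrightarrow> (\<And>k. k \<in> I \<Longrightarrow> smooth_upto n U (f k)) \<Longrightarrow> smooth_upto n U (\<lambda>x. \<Prod>k\<in>I. f k x)"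
  by (induction I rule: finite_induct) (simp_all add: smooth_upto_const smooth_upto_mult)

lemma smooth_upto_component:
  fixes f :: "real^'n \<Rightarrow> real^'m::finite"
  shows "smooth_upto n U f \<Longrightarrow> smooth_upto n U (\<lambda>x. f x $ a)"
  using smooth_upto_inner[of n f "\<lambda>_. axis a 1"] smooth_upto_const[of n U "axis a 1"]
  by (simp add: inner_axis)

lemma smooth_upto_inverse:
  fixes f :: "real^'n \<Rightarrow> real"
  shows "smooth_upto n U f \<Longrightarrow> \<forall>x\<in>U. f x \<noteq> 0 \<Longrightarrow> smooth_upto n U (\<lambda>x. inverse (f x))"
proof (induction n arbitrary: f)
  case 0
  then show ?case
    by (simp add: smooth_upto_0)
next
  case (Suc n)
  have inv: "smooth_upto n U (\<lambda>x. inverse (f x))"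
    using Suc.IH[OF smooth_upto_mono Suc.prems(2)] Suc.prems(1) by simp
  have "smooth_upto n U (pd i (\<lambda>x. inverse (f x)))" for i
    by (rule smooth_upto_cong[OF _ smooth_upto_minus[OF smooth_upto_mult[OF
            smooth_upto_mult[OF smooth_upto_pd[OF Suc.prems(1), of i] inv] inv]]])
      (use smooth_upto_differentiable_at[OF Suc.prems(1)] Suc.prems(2) in \<open>simp add: pd_inverse\<close>)
  with inv show ?case
    by (simp add: smooth_upto_Suc smooth_upto_differentiable_on)
qed

end

section \<open>Symmetry of second partial derivatives\<close>

lemma has_real_derivative_along_axis:
  fixes f :: "real^'n::finite \<Rightarrow> real"
  assumes "f differentiable at (q + s *\<^sub>R axis k 1)"
  shows "((\<lambda>s. f (q + s *\<^sub>R axis k 1)) has_real_derivative pd k f (q + s *\<^sub>R axis k 1)) (at s)"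
proof -
  let ?x = "q + s *\<^sub>R axis k 1"
  have line: "((\<lambda>s. q + s *\<^sub>R axis k (1::real)) has_derivative (\<lambda>s. s *\<^sub>R axis k 1)) (at s)"
    by (auto intro!: derivative_eq_intros)
  have "((\<lambda>s. f (q + s *\<^sub>R axis k 1)) has_derivative
      (\<lambda>s. frechet_derivative f (at ?x) (s *\<^sub>R axis k 1))) (at s)"
    using has_derivative_compose[OF line assms[unfolded frechet_derivative_works]] .
  moreover have "(\<lambda>s. frechet_derivative f (at ?x) (s *\<^sub>R axis k 1)) = (*) (pd k f ?x)"
    using linear_frechet_derivative[OF assms] by (auto simp: pd_def linear_scale mult.commute)
  ultimately show ?thesis by (simp add: has_field_derivative_def mult.commute)
qed

text \<open>Two applications of the mean value theorem to the mixed second difference.\<close>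
lemma mixed_difference_mean_value:
  fixes f :: "real^'n::finite \<Rightarrow> real"
  assumes h: "0 < h"
    and inU: "\<And>s t. 0 \<le> s \<Longrightarrow> s \<le> h \<Longrightarrow> 0 \<le> t \<Longrightarrow> t \<le> h \<Longrightarrow> p + s *\<^sub>R axis i 1 + t *\<^sub>R axis j 1 \<in> U"
    and f: "\<And>x. x \<in> U \<Longrightarrow> f differentiable at x"
    and fi: "\<And>x. x \<in> U \<Longrightarrow> pd i f differentiable at x"
  obtains s t where "0 < s" "s < h" "0 < t" "t < h"
    "f (p + h *\<^sub>R axis i 1 + h *\<^sub>R axis j 1) - f (p + h *\<^sub>R axis i 1) - f (p + h *\<^sub>R axis j 1) + f p
       = h * h * pd j (pd i f) (p + s *\<^sub>R axis i 1 + t *\<^sub>R axis j 1)"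
proof -
  define e :: "real^'n" where "e = axis i 1"
  define d :: "real^'n" where "d = axis j 1"
  define A where "A \<sigma> = f ((p + h *\<^sub>R d) + \<sigma> *\<^sub>R e) - f (p + \<sigma> *\<^sub>R e)" for \<sigma>
  have "DERIV A \<sigma> :> pd i f ((p + h *\<^sub>R d) + \<sigma> *\<^sub>R e) - pd i f (p + \<sigma> *\<^sub>R e)"
    if "0 \<le> \<sigma>" "\<sigma> \<le> h" for \<sigma>
  proof -
    have "(p + h *\<^sub>R d) + \<sigma> *\<^sub>R e \<in> U" "p + \<sigma> *\<^sub>R e \<in> U"
      using inU[of \<sigma> h] inU[of \<sigma> 0] that h by (simp_all add: e_def d_def algebra_simps)
    then show ?thesis unfolding A_def[abs_def] e_def
      by (intro DERIV_diff has_real_derivative_along_axis f) (auto simp: e_def)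
  qed
  from MVT2[OF h this] obtain s where s: "0 < s" "s < h"
    and sA: "A h - A 0 = h * (pd i f ((p + h *\<^sub>R d) + s *\<^sub>R e) - pd i f (p + s *\<^sub>R e))"
    by auto
  define B where "B \<tau> = pd i f ((p + s *\<^sub>R e) + \<tau> *\<^sub>R d)" for \<tau>
  have "DERIV B \<tau> :> pd j (pd i f) ((p + s *\<^sub>R e) + \<tau> *\<^sub>R d)" if "0 \<le> \<tau>" "\<tau> \<le> h" for \<tau>
  proof -
    have "(p + s *\<^sub>R e) + \<tau> *\<^sub>R d \<in> U"
      using inU[of s \<tau>] that s by (simp add: e_def d_def algebra_simps)
    then show ?thesis unfolding B_def[abs_def] d_def
      by (intro has_real_derivative_along_axis fi) (auto simp: d_def)
  qed
  from MVT2[OF h this] obtain t where t: "0 < t" "t < h"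
    and tB: "B h - B 0 = h * pd j (pd i f) ((p + s *\<^sub>R e) + t *\<^sub>R d)"
    by auto
  have "f (p + h *\<^sub>R e + h *\<^sub>R d) - f (p + h *\<^sub>R e) - f (p + h *\<^sub>R d) + f p = A h - A 0"
    unfolding A_def by (simp add: algebra_simps)
  also have "\<dots> = h * (B h - B 0)" using sA unfolding B_def by (simp add: algebra_simps)
  also have "\<dots> = h * h * pd j (pd i f) (p + s *\<^sub>R e + t *\<^sub>R d)" using tB by simp
  finally show ?thesis using s t that unfolding e_def d_def by blast
qed

lemma dist_add_two_axes: "dist (p + s *\<^sub>R axis i (1::real) + t *\<^sub>R axis j 1) p \<le> \<bar>s\<bar> + \<bar>t\<bar>"
  using norm_triangle_ineq[of "s *\<^sub>R axis i (1::real)" "t *\<^sub>R axis j 1"] by (simp add: dist_norm)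

lemma mixed_difference_tendsto:
  fixes f :: "real^'n::finite \<Rightarrow> real"
  assumes U: "open U" and p: "p \<in> U"
    and f: "\<And>x. x \<in> U \<Longrightarrow> f differentiable at x"
    and fi: "\<And>x. x \<in> U \<Longrightarrow> pd i f differentiable at x"
    and cont: "continuous (at p) (pd j (pd i f))"
  shows "((\<lambda>h. (f (p + h *\<^sub>R axis i 1 + h *\<^sub>R axis j 1) - f (p + h *\<^sub>R axis i 1)
            - f (p + h *\<^sub>R axis j 1) + f p) / (h * h)) \<longlongrightarrow> pd j (pd i f) p) (at_right 0)"
proof (rule tendstoI)
  fix \<epsilon> :: real assume "\<epsilon> > 0"
  obtain r where r: "r > 0" "ball p r \<subseteq> U"
    using U p open_contains_ball by blast
  obtain \<delta> where \<delta>: "\<delta> > 0" "\<And>y. dist y p < \<delta> \<Longrightarrow> dist (pd j (pd i f) y) (pd j (pd i f) p) < \<epsilon>"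
    using cont \<open>\<epsilon> > 0\<close> unfolding continuous_at_eps_delta by blast
  have "dist ((f (p + h *\<^sub>R axis i 1 + h *\<^sub>R axis j 1) - f (p + h *\<^sub>R axis i 1)
            - f (p + h *\<^sub>R axis j 1) + f p) / (h * h)) (pd j (pd i f) p) < \<epsilon>"
    if h: "0 < h" "h < min r \<delta> / 2" for h
  proof -
    have "p + s *\<^sub>R axis i 1 + t *\<^sub>R axis j 1 \<in> U"
      if "0 \<le> s" "s \<le> h" "0 \<le> t" "t \<le> h" for s t
      using dist_add_two_axes[of p s i t j] that h r by (auto simp: dist_commute)
    from mixed_difference_mean_value[OF h(1) this f fi] obtain s t
      where st: "0 < s" "s < h" "0 < t" "t < h"
        and eq: "f (p + h *\<^sub>R axis i 1 + h *\<^sub>R axis j 1) - f (p + h *\<^sub>R axis i 1)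
            - f (p + h *\<^sub>R axis j 1) + f p = h * h * pd j (pd i f) (p + s *\<^sub>R axis i 1 + t *\<^sub>R axis j 1)"
      by blast
    have "dist (p + s *\<^sub>R axis i 1 + t *\<^sub>R axis j 1) p < \<delta>"
      using dist_add_two_axes[of p s i t j] st h by simp
    then show ?thesis using \<delta>(2) eq h(1) by simp
  qed
  then show "\<forall>\<^sub>F h in at_right 0. dist ((f (p + h *\<^sub>R axis i 1 + h *\<^sub>R axis j 1) - f (p + h *\<^sub>R axis i 1)
            - f (p + h *\<^sub>R axis j 1) + f p) / (h * h)) (pd j (pd i f) p) < \<epsilon>"
    unfolding eventually_at_right_field using r(1) \<delta>(1) by (intro exI[of _ "min r \<delta> / 2"]) auto
qed

lemma pd_pd_commute:
  fixes f :: "real^'n::finite \<Rightarrow> real"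
  assumes U: "open U" and f: "smooth_upto 2 U f" and p: "p \<in> U"
  shows "pd i (pd j f) p = pd j (pd i f) p"
proof -
  have f1: "smooth_upto 1 U (pd k f)" for k
    using smooth_upto_pd[of 1 U f] f by (simp add: numeral_2_eq_2)
  have cont: "continuous (at p) (pd k (pd l f))" for k l
  proof -
    have "smooth_upto 0 U (pd k (pd l f))"
      using smooth_upto_pd[of 0 U "pd l f" k] f1 by simp
    then show ?thesis
      using smooth_upto_differentiable_at[OF U _ p] differentiable_imp_continuous_within by blast
  qed
  have diff: "\<And>x. x \<in> U \<Longrightarrow> f differentiable at x" "\<And>x. x \<in> U \<Longrightarrow> pd k f differentiable at x" for k
    using smooth_upto_differentiable_at[OF U f] smooth_upto_differentiable_at[OF U f1] by blast+
  define Q where "Q k l h = (f (p + h *\<^sub>R axis k 1 + h *\<^sub>R axis l 1) - f (p + h *\<^sub>R axis k 1)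
      - f (p + h *\<^sub>R axis l 1) + f p) / (h * h)" for k l h
  have "Q j i = Q i j"
    by (simp add: Q_def fun_eq_iff algebra_simps)
  moreover have "(Q k l \<longlongrightarrow> pd l (pd k f) p) (at_right 0)" for k l
    unfolding Q_def by (rule mixed_difference_tendsto[OF U p diff cont])
  ultimately show ?thesis
    using tendsto_unique[OF trivial_limit_at_right_real] by metis
qed

lemma pd_pd_component:
  fixes f :: "real^'n::finite \<Rightarrow> real^'m::finite"
  assumes U: "open U" and f: "smooth_upto 2 U f" and p: "p \<in> U"
  shows "pd i (pd j f) p $ a = pd i (pd j (\<lambda>q. f q $ a)) p"
proof -
  have f1: "smooth_upto 1 U (pd j f)"
    using f smooth_upto_pd[of 1 U f] by (simp add: numeral_2_eq_2)
  have "pd i (pd j f) p $ a = pd i (\<lambda>q. pd j f q $ a) p"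
    by (rule pd_component[symmetric, OF smooth_upto_differentiable_at[OF U f1 p]])
  also have "\<dots> = pd i (pd j (\<lambda>q. f q $ a)) p"
    by (rule pd_cong_open[OF U p]) (use smooth_upto_differentiable_at[OF U f] pd_component in metis)
  finally show ?thesis .
qed

lemma pd_pd_commute_vec:
  fixes f :: "real^'n::finite \<Rightarrow> real^'m::finite"
  assumes U: "open U" and f: "smooth_upto 2 U f" and p: "p \<in> U"
  shows "pd i (pd j f) p = pd j (pd i f) p"
  using pd_pd_commute[OF U smooth_upto_component[OF U f] p]
  by (simp add: vec_eq_iff pd_pd_component[OF assms])

context
  fixes U :: "(real^'n::finite) set"
  assumes U: "open U"
begin

lemma smooth_on_cong: "smooth_on U f \<Longrightarrow> \<forall>y\<in>U. f y = g y \<Longrightarrow> smooth_on U g"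
  unfolding smooth_on_iff_smooth_upto using smooth_upto_cong[OF U] by blast

lemma smooth_on_const: "smooth_on U (\<lambda>x. c)"
  unfolding smooth_on_iff_smooth_upto using smooth_upto_const by blast

lemma smooth_on_add: "smooth_on U f \<Longrightarrow> smooth_on U g \<Longrightarrow> smooth_on U (\<lambda>x. f x + g x)"
  unfolding smooth_on_iff_smooth_upto using smooth_upto_add[OF U] by blast

lemma smooth_on_mult:
  fixes f g :: "real^'n \<Rightarrow> real"
  shows "smooth_on U f \<Longrightarrow> smooth_on U g \<Longrightarrow> smooth_on U (\<lambda>x. f x * g x)"
  unfolding smooth_on_iff_smooth_upto using smooth_upto_mult[OF U] by blast

lemma smooth_on_scaleR:
  fixes f :: "real^'n \<Rightarrow> real" and g :: "real^'n \<Rightarrow> 'a::real_normed_vector"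
  shows "smooth_on U f \<Longrightarrow> smooth_on U g \<Longrightarrow> smooth_on U (\<lambda>x. f x *\<^sub>R g x)"
  unfolding smooth_on_iff_smooth_upto using smooth_upto_scaleR[OF U] by blast

lemma smooth_on_inner:
  fixes f g :: "real^'n \<Rightarrow> 'a::real_inner"
  shows "smooth_on U f \<Longrightarrow> smooth_on U g \<Longrightarrow> smooth_on U (\<lambda>x. f x \<bullet> g x)"
  unfolding smooth_on_iff_smooth_upto using smooth_upto_inner[OF U] by blast

lemma smooth_on_sum:
  "finite I \<Longrightarrow> (\<And>k. k \<in> I \<Longrightarrow> smooth_on U (f k)) \<Longrightarrow> smooth_on U (\<lambda>x. \<Sum>k\<in>I. f k x)"
  unfolding smooth_on_iff_smooth_upto using smooth_upto_sum[OF U] by blast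

lemma smooth_on_prod:
  fixes f :: "'k \<Rightarrow> real^'n \<Rightarrow> real"
  shows "finite I \<Longrightarrow> (\<And>k. k \<in> I \<Longrightarrow> smooth_on U (f k)) \<Longrightarrow> smooth_on U (\<lambda>x. \<Prod>k\<in>I. f k x)"
  unfolding smooth_on_iff_smooth_upto using smooth_upto_prod[OF U] by blast

lemma smooth_on_component:
  fixes f :: "real^'n \<Rightarrow> real^'m::finite"
  shows "smooth_on U f \<Longrightarrow> smooth_on U (\<lambda>x. f x $ a)"
  unfolding smooth_on_iff_smooth_upto using smooth_upto_component[OF U] by blast

lemma smooth_on_divide:
  fixes f g :: "real^'n \<Rightarrow> real"
  assumes "smooth_on U f" "smooth_on U g" "\<forall>x\<in>U. g x \<noteq> 0"
  shows "smooth_on U (\<lambda>x. f x / g x)"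
  using assms smooth_upto_mult[OF U _ smooth_upto_inverse[OF U]]
  unfolding smooth_on_iff_smooth_upto divide_inverse by blast

lemma smooth_on_differentiable_at: "smooth_on U f \<Longrightarrow> x \<in> U \<Longrightarrow> f differentiable at x"
  unfolding smooth_on_iff_smooth_upto using smooth_upto_differentiable_at[OF U] by blast

lemma smooth_on_pd_pd_commute:
  fixes f :: "real^'n \<Rightarrow> real"
  shows "smooth_on U f \<Longrightarrow> x \<in> U \<Longrightarrow> pd i (pd j f) x = pd j (pd i f) x"
  unfolding smooth_on_iff_smooth_upto using pd_pd_commute[OF U] by blast

lemma smooth_on_pd_pd_commute_vec:
  fixes f :: "real^'n \<Rightarrow> real^'m::finite"
  shows "smooth_on U f \<Longrightarrow> x \<in> U \<Longrightarrow> pd i (pd j f) x = pd j (pd i f) x"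
  unfolding smooth_on_iff_smooth_upto using pd_pd_commute_vec[OF U] by blast

end

lemma smooth_on_det:
  fixes A :: "real^'n::finite \<Rightarrow> real^'k::finite^'k"
  assumes U: "open U" and A: "\<And>a b. smooth_on U (\<lambda>q. A q $ a $ b)"
  shows "smooth_on U (\<lambda>q. det (A q))"
  unfolding det_def
  by (intro smooth_on_sum[OF U] smooth_on_mult[OF U] smooth_on_const[OF U] smooth_on_prod[OF U] A
      finite_permutations) auto

lemma sum_mult_delta [simp]:
  fixes f :: "'b::finite \<Rightarrow> 'a::comm_ring_1"
  shows "(\<Sum>j\<in>UNIV. f j * (if j = k then 1 else 0)) = f k"
    and "(\<Sum>j\<in>UNIV. f j * (if k = j then 1 else 0)) = f k"
  by (simp_all add: if_distrib[of "\<lambda>x. f _ * x"] cong: if_cong)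

locale immersed_hypersurface =
  fixes X :: "real^'n::finite \<Rightarrow> real^'m::finite" and nu :: "real^'n \<Rightarrow> real^'m"
    and U :: "(real^'n) set"
  assumes U: "open U" and codim_one: "CARD('m) = CARD('n) + 1"
    and X_smooth: "smooth_on U X" and immersion: "\<forall>p\<in>U. inj (frechet_derivative X (at p))"
    and nu_smooth: "smooth_on U nu" and nu_unit: "\<forall>p\<in>U. norm (nu p) = 1"
    and nu_normal: "\<forall>p\<in>U. \<forall>i. nu p \<bullet> pd i X p = 0"
begin

definition metric_matrix :: "real^'n \<Rightarrow> real^'n^'n" where
  "metric_matrix q = (\<chi> a b. metric X q a b)"

lemma nu_inner_nu: "q \<in> U \<Longrightarrow> nu q \<bullet> nu q = 1"
  using nu_unit by (simp add: dot_square_norm)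

lemma nu_inner_pd_X: "q \<in> U \<Longrightarrow> nu q \<bullet> pd i X q = 0"
  using nu_normal by blast

lemma pd_X_inner_nu: "q \<in> U \<Longrightarrow> pd i X q \<bullet> nu q = 0"
  using nu_normal by (simp add: inner_commute)

lemma X_differentiable: "q \<in> U \<Longrightarrow> X differentiable at q"
  by (rule smooth_on_differentiable_at[OF U X_smooth])

lemma frechet_derivative_X:
  assumes q: "q \<in> U"
  shows "frechet_derivative X (at q) c = (\<Sum>k\<in>UNIV. c $ k *\<^sub>R pd k X q)"
proof -
  have lin: "linear (frechet_derivative X (at q))"
    by (rule linear_frechet_derivative[OF X_differentiable[OF q]])
  have "c = (\<Sum>k\<in>UNIV. c $ k *\<^sub>R axis k 1)"
    using basis_expansion[of c] by (simp add: scalar_mult_eq_scaleR)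
  then have "frechet_derivative X (at q) c =
      frechet_derivative X (at q) (\<Sum>k\<in>UNIV. c $ k *\<^sub>R axis k 1)"
    by simp
  also have "\<dots> = (\<Sum>k\<in>UNIV. c $ k *\<^sub>R frechet_derivative X (at q) (axis k 1))"
    by (simp add: linear_sum[OF lin] linear_scale[OF lin])
  finally show ?thesis by (simp add: pd_def)
qed

lemma metric_null_vector:
  assumes q: "q \<in> U" and c: "\<And>a. (\<Sum>b\<in>UNIV. metric X q a b * c $ b) = 0"
  shows "c = 0"
proof -
  define w where "w = (\<Sum>k\<in>UNIV. c $ k *\<^sub>R pd k X q)"
  have "w \<bullet> w = (\<Sum>a\<in>UNIV. c $ a * (\<Sum>b\<in>UNIV. metric X q a b * c $ b))"
    unfolding w_def metric_def
    by (simp add: inner_sum_left inner_sum_right sum_distrib_left mult_ac inner_commute)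
  also have "\<dots> = 0" using c by simp
  finally have "w = 0" by simp
  then have "frechet_derivative X (at q) c = frechet_derivative X (at q) 0"
    using frechet_derivative_X[OF q, of c] linear_0[OF linear_frechet_derivative[OF X_differentiable[OF q]]]
    by (simp add: w_def)
  then show ?thesis using immersion q by (meson injD)
qed

lemma metric_matrix_invertible:
  assumes q: "q \<in> U"
  shows "invertible (metric_matrix q)"
proof -
  have "inj ((*v) (metric_matrix q))"
  proof (rule injI)
    fix x y assume "metric_matrix q *v x = metric_matrix q *v y"
    then have "metric_matrix q *v (x - y) = 0" by (simp add: matrix_vector_mult_diff_distrib)
    then have "x - y = 0"
      by (intro metric_null_vector[OF q]) (simp add: metric_matrix_def matrix_vector_mult_def vec_eq_iff)
    then show "x = y" by simp
  qed
  then have "det (matrix ((*v) (metric_matrix q))) \<noteq> 0"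
    using det_nz_iff_inj[OF matrix_vector_mul_linear] by blast
  then show ?thesis unfolding matrix_of_matrix_vector_mul invertible_det_nz .
qed

lemma metric_matrix_inverse:
  "q \<in> U \<Longrightarrow> metric_matrix q ** matrix_inv (metric_matrix q) = mat 1 \<and>
    matrix_inv (metric_matrix q) ** metric_matrix q = mat 1"
  using metric_matrix_invertible unfolding invertible_def matrix_inv_def by (rule someI_ex)

lemma ginv_eq: "ginv X q i j = matrix_inv (metric_matrix q) $ i $ j"
  unfolding ginv_def metric_matrix_def ..

lemma ginv_metric: "q \<in> U \<Longrightarrow> (\<Sum>j\<in>UNIV. ginv X q i j * metric X q j k) = (if i = k then 1 else 0)"
  using metric_matrix_inverse[of q] unfolding ginv_eq
  by (auto simp: matrix_matrix_mult_def mat_def vec_eq_iff metric_matrix_def)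

lemma metric_sym: "metric X q i j = metric X q j i"
  unfolding metric_def by (simp add: inner_commute)

lemma ginv_sym:
  assumes q: "q \<in> U"
  shows "ginv X q i j = ginv X q j i"
proof -
  let ?G = "metric_matrix q" and ?B = "matrix_inv (metric_matrix q)"
  have "transpose ?G = ?G"
    by (simp add: metric_matrix_def transpose_def vec_eq_iff metric_sym)
  then have "?G ** transpose ?B = transpose (?B ** ?G)"
    by (simp add: matrix_transpose_mul)
  then have GB: "?G ** transpose ?B = mat 1"
    using metric_matrix_inverse[OF q] by (simp add: transpose_mat)
  have "transpose ?B = (?B ** ?G) ** transpose ?B"
    using metric_matrix_inverse[OF q] by simp
  also have "\<dots> = ?B ** (?G ** transpose ?B)"
    by (simp add: matrix_mul_assoc)
  also have "\<dots> = ?B"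
    by (simp add: GB)
  finally have "transpose ?B $ i $ j = ?B $ i $ j"
    by simp
  then show ?thesis
    unfolding ginv_eq by (simp add: transpose_def)
qed

lemma ginv_cramer:
  assumes q: "q \<in> U"
  shows "ginv X q i j =
    det (\<chi> a b. if b = i then (if a = j then 1 else 0) else metric X q a b) / det (metric_matrix q)"
proof -
  let ?x = "matrix_inv (metric_matrix q) *v axis j 1"
  have "metric_matrix q *v ?x = axis j 1"
    using metric_matrix_inverse[OF q] by (simp add: matrix_vector_mul_assoc)
  then have "?x = (\<chi> k. det (\<chi> a b. if b = k then axis j 1 $ a else metric_matrix q $ a $ b) /
      det (metric_matrix q))"
    using cramer[OF metric_matrix_invertible[OF q, unfolded invertible_det_nz]] by blast
  then have "?x $ i = det (\<chi> a b. if b = i then axis j 1 $ a else metric_matrix q $ a $ b) /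
      det (metric_matrix q)"
    by simp
  moreover have "?x $ i = ginv X q i j"
    by (simp add: matrix_vector_mult_basis column_def ginv_eq)
  moreover have "(\<chi> a b. if b = i then axis j 1 $ a else metric_matrix q $ a $ b) =
      (\<chi> a b. if b = i then (if a = j then 1 else 0) else metric X q a b)"
    by (simp add: metric_matrix_def axis_def vec_eq_iff)
  ultimately show ?thesis by simp
qed

lemma smooth_on_pd_X: "smooth_on U (pd k X)"
  by (rule smooth_on_pd[OF X_smooth])

lemma smooth_on_metric: "smooth_on U (\<lambda>q. metric X q i j)"
  unfolding metric_def by (intro smooth_on_inner[OF U] smooth_on_pd_X)

lemma smooth_on_ginv: "smooth_on U (\<lambda>q. ginv X q i j)"
proof (rule smooth_on_cong[OF U])
  have smooth_if: "smooth_on U f \<Longrightarrow> smooth_on U g \<Longrightarrow> smooth_on U (\<lambda>x. if P then f x else g x)"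
    for P and f g :: "real^'n \<Rightarrow> real"
    by (cases P) auto
  have det: "\<forall>q\<in>U. det (\<chi> a b. metric X q a b) \<noteq> 0"
    using metric_matrix_invertible unfolding metric_matrix_def invertible_det_nz by blast
  show "smooth_on U (\<lambda>q. det (\<chi> a b. if b = i then (if a = j then 1 else 0) else metric X q a b) /
      det (metric_matrix q))"
    unfolding metric_matrix_def
    by (intro smooth_on_divide[OF U] smooth_on_det[OF U] det)
      (auto simp: smooth_on_const[OF U] smooth_on_metric intro!: smooth_if)
  show "\<forall>q\<in>U. det (\<chi> a b. if b = i then (if a = j then 1 else 0) else metric X q a b) /
      det (metric_matrix q) = ginv X q i j"
    using ginv_cramer by simp
qed

text \<open>The \<open>n\<close> vectors \<open>\<partial>\<^sub>k X\<close> and \<open>\<nu>\<close> are independent, so they span \<open>\<real>\<^sup>n\<^sup>+\<^sup>1\<close>.\<close>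
lemma orthogonal_frame_zero:
  assumes q: "q \<in> U" and zX: "\<And>k. z \<bullet> pd k X q = 0" and znu: "z \<bullet> nu q = 0"
  shows "z = 0"
proof (rule ccontr)
  assume z0: "z \<noteq> 0"
  define B where "B = frechet_derivative X (at q) ` Basis"
  have lin: "linear (frechet_derivative X (at q))"
    by (rule linear_frechet_derivative[OF X_differentiable[OF q]])
  have inj: "inj (frechet_derivative X (at q))"
    using immersion q by blast
  have indB: "independent B"
    unfolding B_def using lin inj
    by (simp add: Linear_Algebra.independent_Basis linear_independent_injective_image)
  have cardB: "card B = CARD('n)"
    unfolding B_def using card_image[OF inj_on_subset[OF inj subset_UNIV], of Basis] by simp
  have B_pd: "\<And>b. b \<in> B \<Longrightarrow> \<exists>k. b = pd k X q"
    unfolding B_def Basis_vec_def pd_def by auto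
  have nu_orth: "\<And>b. b \<in> B \<Longrightarrow> orthogonal (nu q) b"
    using B_pd nu_inner_pd_X[OF q] unfolding orthogonal_def by blast
  have nuB: "nu q \<notin> span B"
  proof
    assume "nu q \<in> span B"
    then have "orthogonal (nu q) (nu q)" by (rule orthogonal_to_span) (rule nu_orth)
    then show False using nu_inner_nu[OF q] unfolding orthogonal_def by simp
  qed
  have z_orth: "\<And>b. b \<in> insert (nu q) B \<Longrightarrow> orthogonal z b"
    using B_pd zX znu unfolding orthogonal_def by blast
  have zB: "z \<notin> span (insert (nu q) B)"
  proof
    assume "z \<in> span (insert (nu q) B)"
    then have "orthogonal z z" by (rule orthogonal_to_span) (rule z_orth)
    then show False using z0 unfolding orthogonal_def by simp
  qed
  have ind: "independent (insert z (insert (nu q) B))"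
    by (intro independent_insertI zB nuB indB)
  have "nu q \<notin> B" using nuB span_base by blast
  moreover have "z \<notin> insert (nu q) B" using zB span_base by blast
  ultimately have "card (insert z (insert (nu q) B)) = CARD('n) + 2"
    using cardB by (simp add: B_def)
  moreover have "card (insert z (insert (nu q) B)) \<le> CARD('m)"
    using independent_bound[OF ind] by simp
  ultimately show False using codim_one by simp
qed

lemma tangent_normal_decomposition:
  assumes q: "q \<in> U"
  shows "(\<Sum>k\<in>UNIV. \<Sum>l\<in>UNIV. (ginv X q k l * (w \<bullet> pd k X q)) *\<^sub>R pd l X q) + (w \<bullet> nu q) *\<^sub>R nu q = w"
proof -
  define t where "t = (\<Sum>k\<in>UNIV. \<Sum>l\<in>UNIV. (ginv X q k l * (w \<bullet> pd k X q)) *\<^sub>R pd l X q)"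
  have "t \<bullet> pd j X q = (\<Sum>k\<in>UNIV. (w \<bullet> pd k X q) * (\<Sum>l\<in>UNIV. ginv X q k l * metric X q l j))" for j
    unfolding t_def metric_def
    by (simp add: inner_sum_left sum_distrib_left mult.assoc mult.left_commute)
  then have "t \<bullet> pd j X q = w \<bullet> pd j X q" for j
    using ginv_metric[OF q] by simp
  moreover have "t \<bullet> nu q = 0"
    unfolding t_def using pd_X_inner_nu[OF q] by (simp add: inner_sum_left)
  ultimately have "w - (w \<bullet> nu q) *\<^sub>R nu q - t = 0"
    using nu_inner_pd_X[OF q] nu_inner_nu[OF q]
    by (intro orthogonal_frame_zero[OF q]) (simp_all add: inner_diff_left)
  then show ?thesis unfolding t_def by (simp add: algebra_simps)
qed

end

section \<open>Tangent tensors in ambient coordinates\<close>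

lemma sum_swap_middle:
  "(\<Sum>a\<in>A. \<Sum>b\<in>B. \<Sum>c\<in>C. F a b c) = (\<Sum>a\<in>A. \<Sum>c\<in>C. \<Sum>b\<in>B. F a b c)"
  by (rule sum.cong[OF refl], rule sum.swap)

lemma sum_swap_pairs:
  "(\<Sum>k\<in>A. \<Sum>l\<in>B. \<Sum>k'\<in>C. \<Sum>r\<in>E. F k l k' r) = (\<Sum>k'\<in>C. \<Sum>r\<in>E. \<Sum>k\<in>A. \<Sum>l\<in>B. F k l k' r)"
proof -
  have "(\<Sum>k\<in>A. \<Sum>l\<in>B. \<Sum>k'\<in>C. \<Sum>r\<in>E. F k l k' r) = (\<Sum>k\<in>A. \<Sum>k'\<in>C. \<Sum>l\<in>B. \<Sum>r\<in>E. F k l k' r)"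
    by (rule sum_swap_middle)
  also have "\<dots> = (\<Sum>k'\<in>C. \<Sum>k\<in>A. \<Sum>l\<in>B. \<Sum>r\<in>E. F k l k' r)"
    by (rule sum.swap)
  also have "\<dots> = (\<Sum>k'\<in>C. \<Sum>k\<in>A. \<Sum>r\<in>E. \<Sum>l\<in>B. F k l k' r)"
    by (rule sum.cong[OF refl], rule sum_swap_middle)
  also have "\<dots> = (\<Sum>k'\<in>C. \<Sum>r\<in>E. \<Sum>k\<in>A. \<Sum>l\<in>B. F k l k' r)"
    by (rule sum_swap_middle)
  finally show ?thesis .
qed

lemma sum_swap_first_to_last:
  "(\<Sum>c\<in>A. \<Sum>i\<in>B. \<Sum>j\<in>C. \<Sum>k\<in>E. \<Sum>l\<in>F. G c i j k l) =
   (\<Sum>i\<in>B. \<Sum>j\<in>C. \<Sum>k\<in>E. \<Sum>l\<in>F. \<Sum>c\<in>A. G c i j k l)"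
  by (subst sum.swap, rule sum.cong[OF refl], subst sum.swap, rule sum.cong[OF refl],
      subst sum.swap, rule sum.cong[OF refl], rule sum.swap)

lemma sum_mult_component_eq_inner: "(\<Sum>a\<in>UNIV. v $ a * w $ a) = v \<bullet> (w :: real^'m::finite)"
  by (simp add: inner_vec_def)

context immersed_hypersurface
begin

text \<open>\<open>sharp q A\<close> is the tangent vector \<open>g\<^sup>k\<^sup>l A\<^sub>l \<partial>\<^sub>k X\<close> metrically dual to the covector \<open>A\<close>, written in the
  coordinates of \<open>\<real>\<^sup>n\<^sup>+\<^sup>1\<close>; \<open>sharp2\<close> does the same to both slots of a bilinear form. All tensors below
  carry ambient indices \<open>a, b, c, d :: 'm\<close>.\<close>

definition sharp :: "real^'n \<Rightarrow> ('n \<Rightarrow> real) \<Rightarrow> real^'m" where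
  "sharp q A = (\<Sum>k\<in>UNIV. \<Sum>l\<in>UNIV. (ginv X q k l * A l) *\<^sub>R pd k X q)"

definition sharp2 :: "real^'n \<Rightarrow> ('n \<Rightarrow> 'n \<Rightarrow> real) \<Rightarrow> 'm \<Rightarrow> 'm \<Rightarrow> real" where
  "sharp2 q H a b = sharp q (\<lambda>l. sharp q (H l) $ b) $ a"

lemma sharp_component: "sharp q A $ a = (\<Sum>k\<in>UNIV. \<Sum>l\<in>UNIV. ginv X q k l * A l * pd k X q $ a)"
  by (simp add: sharp_def sum_component)

lemma sharp_inner_left: "sharp q A \<bullet> v = (\<Sum>k\<in>UNIV. \<Sum>l\<in>UNIV. ginv X q k l * A l * (pd k X q \<bullet> v))"
  by (simp add: sharp_def inner_sum_left)

lemma sharp_inner_pd_X: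
  assumes q: "q \<in> U"
  shows "sharp q A \<bullet> pd j X q = A j"
proof -
  have "sharp q A \<bullet> pd j X q = (\<Sum>k\<in>UNIV. \<Sum>l\<in>UNIV. ginv X q k l * A l * metric X q k j)"
    by (simp add: sharp_inner_left metric_def)
  also have "\<dots> = (\<Sum>l\<in>UNIV. \<Sum>k\<in>UNIV. ginv X q k l * A l * metric X q k j)"
    by (rule sum.swap)
  also have "\<dots> = (\<Sum>l\<in>UNIV. A l * (\<Sum>k\<in>UNIV. ginv X q l k * metric X q k j))"
    by (simp add: sum_distrib_left ginv_sym[OF q, of _ l for l] mult_ac)
  also have "\<dots> = A j"
    by (simp add: ginv_metric[OF q])
  finally show ?thesis .
qed

lemma sharp_inner_nu: "q \<in> U \<Longrightarrow> sharp q A \<bullet> nu q = 0"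
  by (simp add: sharp_inner_left pd_X_inner_nu)

lemma sharp_inner_sharp:
  assumes q: "q \<in> U"
  shows "sharp q A \<bullet> sharp q B = (\<Sum>l\<in>UNIV. \<Sum>l'\<in>UNIV. ginv X q l l' * A l * B l')"
proof -
  have "sharp q A \<bullet> sharp q B = (\<Sum>k\<in>UNIV. \<Sum>l\<in>UNIV. ginv X q k l * A l * (pd k X q \<bullet> sharp q B))"
    by (rule sharp_inner_left)
  also have "\<dots> = (\<Sum>k\<in>UNIV. \<Sum>l\<in>UNIV. ginv X q k l * A l * B k)"
    by (simp add: inner_commute[of "pd k X q" "sharp q B" for k] sharp_inner_pd_X[OF q])
  also have "\<dots> = (\<Sum>l\<in>UNIV. \<Sum>l'\<in>UNIV. ginv X q l l' * A l * B l')"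
    by (subst sum.swap) (simp add: ginv_sym[OF q, of _ l for l])
  finally show ?thesis .
qed

lemma sharp_inner_right:
  assumes q: "q \<in> U"
  shows "sharp q A \<bullet> v = (\<Sum>m\<in>UNIV. (\<Sum>k\<in>UNIV. ginv X q m k * (v \<bullet> pd k X q)) * A m)"
proof -
  have "sharp q A \<bullet> v = (\<Sum>m\<in>UNIV. \<Sum>k\<in>UNIV. ginv X q k m * A m * (pd k X q \<bullet> v))"
    unfolding sharp_inner_left by (rule sum.swap)
  also have "\<dots> = (\<Sum>m\<in>UNIV. (\<Sum>k\<in>UNIV. ginv X q m k * (v \<bullet> pd k X q)) * A m)"
    by (simp add: sum_distrib_right sum_distrib_left ginv_sym[OF q, of _ m for m] inner_commute[of v] mult_ac)
  finally show ?thesis .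
qed

lemma tangent_normal_sharp:
  assumes q: "q \<in> U"
  shows "w = sharp q (\<lambda>r. w \<bullet> pd r X q) + (w \<bullet> nu q) *\<^sub>R nu q"
proof -
  have "sharp q (\<lambda>r. w \<bullet> pd r X q) =
      (\<Sum>k\<in>UNIV. \<Sum>l\<in>UNIV. (ginv X q k l * (w \<bullet> pd k X q)) *\<^sub>R pd l X q)"
    unfolding sharp_def by (subst sum.swap) (simp add: ginv_sym[OF q, of _ l for l])
  then show ?thesis using tangent_normal_decomposition[OF q, of w] by simp
qed

lemma sharp_add: "sharp q (\<lambda>l. A l + B l) = sharp q A + sharp q B"
  by (simp add: sharp_def algebra_simps sum.distrib)

lemma sharp_diff: "sharp q (\<lambda>l. A l - B l) = sharp q A - sharp q B"
  by (simp add: sharp_def algebra_simps sum_subtractf)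

lemma sharp_scale: "sharp q (\<lambda>l. c * A l) = c *\<^sub>R sharp q A"
  by (simp add: sharp_def scaleR_sum_right mult_ac)

lemma sharp_sum: "finite I \<Longrightarrow> sharp q (\<lambda>l. \<Sum>c\<in>I. F c l) = (\<Sum>c\<in>I. sharp q (F c))"
  by (induction I rule: finite_induct) (simp_all add: sharp_add, simp add: sharp_def)

lemma sharp2_expand:
  "sharp2 q H a b = (\<Sum>k\<in>UNIV. \<Sum>l\<in>UNIV. \<Sum>k'\<in>UNIV. \<Sum>r\<in>UNIV.
     ginv X q k l * ginv X q k' r * H l r * pd k X q $ a * pd k' X q $ b)"
  by (simp add: sharp2_def sharp_component sum_distrib_left sum_distrib_right mult_ac)

lemma sharp2_sym:
  assumes H: "\<And>l r. H l r = H r l"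
  shows "sharp2 q H a b = sharp2 q H b a"
  unfolding sharp2_expand by (subst sum_swap_pairs) (simp add: H mult_ac)

lemma sharp2_trace:
  assumes q: "q \<in> U"
  shows "(\<Sum>a\<in>UNIV. sharp2 q H a a) = (\<Sum>l\<in>UNIV. \<Sum>r\<in>UNIV. ginv X q l r * H l r)"
proof -
  have "(\<Sum>a\<in>UNIV. sharp2 q H a a) =
      (\<Sum>a\<in>UNIV. \<Sum>k\<in>UNIV. \<Sum>l\<in>UNIV. ginv X q k l * (sharp q (H l) $ a * pd k X q $ a))"
    by (simp add: sharp2_def sharp_component mult_ac)
  also have "\<dots> = (\<Sum>k\<in>UNIV. \<Sum>l\<in>UNIV. ginv X q k l * (sharp q (H l) \<bullet> pd k X q))"
    by (subst sum.swap, rule sum.cong[OF refl], subst sum.swap)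
      (simp add: inner_vec_def sum_distrib_left)
  also have "\<dots> = (\<Sum>l\<in>UNIV. \<Sum>r\<in>UNIV. ginv X q l r * H l r)"
    by (simp add: sharp_inner_pd_X[OF q]) (subst sum.swap, simp add: ginv_sym[OF q, of _ l for l])
  finally show ?thesis .
qed

lemma sharp2_inner:
  assumes q: "q \<in> U"
  shows "(\<Sum>a\<in>UNIV. \<Sum>b\<in>UNIV. sharp2 q H a b * sharp2 q K a b) =
    (\<Sum>i\<in>UNIV. \<Sum>j\<in>UNIV. \<Sum>k\<in>UNIV. \<Sum>l\<in>UNIV. ginv X q i k * ginv X q j l * H i j * K k l)"
proof -
  have "(\<Sum>a\<in>UNIV. \<Sum>b\<in>UNIV. sharp2 q H a b * sharp2 q K a b) =
      (\<Sum>b\<in>UNIV. \<Sum>a\<in>UNIV. sharp2 q H a b * sharp2 q K a b)"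
    by (rule sum.swap)
  also have "\<dots> = (\<Sum>b\<in>UNIV. \<Sum>i\<in>UNIV. \<Sum>k\<in>UNIV. ginv X q i k * (sharp q (H i) $ b * sharp q (K k) $ b))"
    unfolding sharp2_def sum_mult_component_eq_inner sharp_inner_sharp[OF q] by (simp add: mult_ac)
  also have "\<dots> = (\<Sum>i\<in>UNIV. \<Sum>k\<in>UNIV. ginv X q i k * (sharp q (H i) \<bullet> sharp q (K k)))"
    by (subst sum.swap, rule sum.cong[OF refl], subst sum.swap)
      (simp add: inner_vec_def sum_distrib_left)
  also have "\<dots> = (\<Sum>i\<in>UNIV. \<Sum>k\<in>UNIV. \<Sum>j\<in>UNIV. \<Sum>l\<in>UNIV. ginv X q i k * ginv X q j l * H i j * K k l)"
    by (simp add: sharp_inner_sharp[OF q] sum_distrib_left mult_ac)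
  also have "\<dots> = (\<Sum>i\<in>UNIV. \<Sum>j\<in>UNIV. \<Sum>k\<in>UNIV. \<Sum>l\<in>UNIV. ginv X q i k * ginv X q j l * H i j * K k l)"
    by (rule sum_swap_middle)
  finally show ?thesis .
qed

lemma sharp2_diff: "sharp2 q (\<lambda>l r. H l r - K l r) a b = sharp2 q H a b - sharp2 q K a b"
  by (simp add: sharp2_def sharp_diff)

lemma sharp2_scale: "sharp2 q (\<lambda>l r. H l r * \<alpha>) a b = sharp2 q H a b * \<alpha>"
  using sharp_scale[of q \<alpha>] by (simp add: sharp2_def mult.commute)

lemma sharp2_sum:
  fixes F :: "'c::finite \<Rightarrow> 'n \<Rightarrow> 'n \<Rightarrow> real"
  shows "sharp2 q (\<lambda>l r. \<Sum>c\<in>UNIV. F c l r) a b = (\<Sum>c\<in>UNIV. sharp2 q (F c) a b)"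
proof -
  have "sharp q (\<lambda>r. \<Sum>c\<in>UNIV. F c l r) = (\<Sum>c\<in>UNIV. sharp q (F c l))" for l
    using sharp_sum[of UNIV q "\<lambda>c r. F c l r"] by simp
  moreover have "sharp q (\<lambda>l. \<Sum>c\<in>UNIV. sharp q (F c l) $ b) = (\<Sum>c\<in>UNIV. sharp q (\<lambda>l. sharp q (F c l) $ b))"
    using sharp_sum[of UNIV q "\<lambda>c l. sharp q (F c l) $ b"] by simp
  ultimately show ?thesis
    by (simp add: sharp2_def sum_component)
qed

lemma smooth_on_sharp: "(\<And>l. smooth_on U (\<lambda>q. A q l)) \<Longrightarrow> smooth_on U (\<lambda>q. sharp q (A q))"
  unfolding sharp_def
  by (intro smooth_on_sum[OF U] smooth_on_scaleR[OF U] smooth_on_mult[OF U] smooth_on_ginv smooth_on_pd_X) auto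

lemma grad_fun_eq_sharp: "grad_fun X f q = sharp q (\<lambda>l. pd l f q)"
  unfolding grad_fun_def sharp_def ..

lemma smooth_on_grad_fun: "smooth_on U f \<Longrightarrow> smooth_on U (grad_fun X f)"
  unfolding grad_fun_eq_sharp by (intro smooth_on_sharp smooth_on_pd)

section \<open>Tangential derivatives\<close>

text \<open>Working with \<open>\<delta>\<^sub>a\<close> instead of covariant derivatives turns the tensor
  calculus of the Simons-type identity into sums over the single index set \<open>'m\<close>.\<close>

definition tan_der :: "'m \<Rightarrow> (real^'n \<Rightarrow> real) \<Rightarrow> real^'n \<Rightarrow> real" where
  "tan_der a f q = grad_fun X f q $ a"

lemma tan_der_eq_sharp: "tan_der a f q = sharp q (\<lambda>l. pd l f q) $ a"
  by (simp add: tan_der_def grad_fun_eq_sharp)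

lemma smooth_on_tan_der: "smooth_on U f \<Longrightarrow> smooth_on U (tan_der a f)"
  unfolding tan_der_def[abs_def] by (intro smooth_on_component[OF U] smooth_on_grad_fun)

lemma tan_der_cong:
  assumes "\<forall>y\<in>U. f y = g y" "q \<in> U"
  shows "tan_der a f q = tan_der a g q"
  using pd_cong_open[OF U assms(2,1)] by (simp add: tan_der_eq_sharp)

lemma tan_der_linear:
  assumes "\<And>l. pd l h q = \<alpha> * pd l f q + \<beta> * pd l g q"
  shows "tan_der a h q = \<alpha> * tan_der a f q + \<beta> * tan_der a g q"
  by (simp add: tan_der_eq_sharp assms sharp_add sharp_scale)

lemma tan_der_add:
  "smooth_on U f \<Longrightarrow> smooth_on U g \<Longrightarrow> q \<in> U \<Longrightarrow>
    tan_der a (\<lambda>q. f q + g q) q = tan_der a f q + tan_der a g q"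
  using tan_der_linear[of "\<lambda>q. f q + g q" q 1 f 1 g]
  by (simp add: pd_add smooth_on_differentiable_at[OF U])

lemma tan_der_diff:
  "smooth_on U f \<Longrightarrow> smooth_on U g \<Longrightarrow> q \<in> U \<Longrightarrow>
    tan_der a (\<lambda>q. f q - g q) q = tan_der a f q - tan_der a g q"
  using tan_der_linear[of "\<lambda>q. f q - g q" q 1 f "-1" g]
  by (simp add: pd_diff smooth_on_differentiable_at[OF U])

lemma tan_der_mult:
  "smooth_on U f \<Longrightarrow> smooth_on U g \<Longrightarrow> q \<in> U \<Longrightarrow>
    tan_der a (\<lambda>q. f q * g q) q = tan_der a f q * g q + f q * tan_der a g q"
  using tan_der_linear[of "\<lambda>q. f q * g q" q "g q" f "f q" g]
  by (simp add: pd_mult smooth_on_differentiable_at[OF U] mult_ac)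

lemma tan_der_const: "tan_der a (\<lambda>q. c) q = 0"
  unfolding tan_der_eq_sharp by (simp add: sharp_def)

lemma tan_der_cmult: "smooth_on U f \<Longrightarrow> q \<in> U \<Longrightarrow> tan_der a (\<lambda>q. c * f q) q = c * tan_der a f q"
  using tan_der_mult[OF smooth_on_const[OF U], of f q a c] by (simp add: tan_der_const)

lemma tan_der_minus: "smooth_on U f \<Longrightarrow> q \<in> U \<Longrightarrow> tan_der a (\<lambda>q. - f q) q = - tan_der a f q"
  using tan_der_cmult[of f q a "-1"] by simp

lemma tan_der_sum:
  assumes I: "finite I" and f: "\<And>c. c \<in> I \<Longrightarrow> smooth_on U (f c)" and q: "q \<in> U"
  shows "tan_der a (\<lambda>q. \<Sum>c\<in>I. f c q) q = (\<Sum>c\<in>I. tan_der a (f c) q)"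
  using f q
  by (simp add: tan_der_eq_sharp pd_sum[OF I] smooth_on_differentiable_at[OF U] sharp_sum[OF I] sum_component)

lemma nu_tan_der: "q \<in> U \<Longrightarrow> (\<Sum>a\<in>UNIV. nu q $ a * tan_der a f q) = 0"
  using sharp_inner_nu[of q "\<lambda>l. pd l f q"] by (simp add: tan_der_eq_sharp inner_vec_def mult_ac)

definition shape :: "'m \<Rightarrow> 'm \<Rightarrow> real^'n \<Rightarrow> real" where
  "shape a c q = tan_der a (\<lambda>q. nu q $ c) q"

lemma smooth_on_nu_component: "smooth_on U (\<lambda>q. nu q $ c)"
  by (rule smooth_on_component[OF U nu_smooth])

lemma smooth_on_shape: "smooth_on U (shape a c)"
  unfolding shape_def[abs_def] by (intro smooth_on_tan_der smooth_on_nu_component)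

lemma shape_eq_sharp: "q \<in> U \<Longrightarrow> shape a c q = sharp q (\<lambda>l. pd l nu q $ c) $ a"
  unfolding shape_def tan_der_eq_sharp
  by (simp add: pd_component[OF smooth_on_differentiable_at[OF U nu_smooth]])

lemma pd_grad_fun_inner_pd_X:
  assumes f: "smooth_on U f" and q: "q \<in> U"
  shows "pd l (grad_fun X f) q \<bullet> pd r X q = hess_fun X f q l r"
proof -
  have G: "grad_fun X f differentiable at q"
    by (rule smooth_on_differentiable_at[OF U smooth_on_grad_fun[OF f] q])
  have "pd l (\<lambda>y. grad_fun X f y \<bullet> pd r X y) q = pd l (pd r f) q"
    by (rule pd_cong_open[OF U q]) (simp add: grad_fun_eq_sharp sharp_inner_pd_X)
  then have "pd l (grad_fun X f) q \<bullet> pd r X q + grad_fun X f q \<bullet> pd l (pd r X) q = pd l (pd r f) q"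
    by (simp add: pd_inner G smooth_on_differentiable_at[OF U smooth_on_pd_X q] add.commute)
  moreover have "grad_fun X f q \<bullet> pd l (pd r X) q = (\<Sum>m\<in>UNIV. christoffel X q m l r * pd m f q)"
    unfolding grad_fun_eq_sharp sharp_inner_right[OF q] christoffel_def ..
  ultimately show ?thesis unfolding hess_fun_def by simp
qed

lemma pd_grad_fun_inner_nu:
  assumes f: "smooth_on U f" and q: "q \<in> U"
  shows "pd l (grad_fun X f) q \<bullet> nu q = - (grad_fun X f q \<bullet> pd l nu q)"
proof -
  have G: "grad_fun X f differentiable at q"
    by (rule smooth_on_differentiable_at[OF U smooth_on_grad_fun[OF f] q])
  have "pd l (\<lambda>y. grad_fun X f y \<bullet> nu y) q = pd l (\<lambda>y. 0) q"
    by (rule pd_cong_open[OF U q]) (simp add: grad_fun_eq_sharp sharp_inner_nu)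
  then have "pd l (grad_fun X f) q \<bullet> nu q + grad_fun X f q \<bullet> pd l nu q = 0"
    by (simp add: pd_inner G smooth_on_differentiable_at[OF U nu_smooth q] add.commute)
  then show ?thesis by simp
qed

lemma tan_der_tan_der:
  assumes f: "smooth_on U f" and q: "q \<in> U"
  shows "tan_der a (tan_der b f) q =
    sharp2 q (hess_fun X f q) a b - nu q $ b * (\<Sum>c\<in>UNIV. shape a c q * tan_der c f q)"
proof -
  define G where "G = grad_fun X f"
  have "pd l G q $ b = sharp q (hess_fun X f q l) $ b - nu q $ b * (G q \<bullet> pd l nu q)" for l
    using tangent_normal_sharp[OF q, of "pd l G q"]
    by (simp add: G_def pd_grad_fun_inner_pd_X[OF f q] pd_grad_fun_inner_nu[OF f q])
  moreover have "tan_der b f = (\<lambda>y. G y $ b)"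
    by (simp add: G_def tan_der_def[abs_def])
  then have "tan_der a (tan_der b f) q = sharp q (\<lambda>l. pd l G q $ b) $ a"
    using smooth_on_differentiable_at[OF U smooth_on_grad_fun[OF f] q]
    by (simp add: tan_der_eq_sharp G_def pd_component)
  moreover have "sharp q (\<lambda>l. G q \<bullet> pd l nu q) $ a = (\<Sum>c\<in>UNIV. shape a c q * tan_der c f q)"
    using sharp_sum[of UNIV q "\<lambda>c l. G q $ c * pd l nu q $ c"]
    by (simp add: inner_vec_def sharp_scale sum_component shape_eq_sharp[OF q] tan_der_def G_def mult.commute)
  ultimately show ?thesis
    by (simp add: sharp_diff sharp_scale sharp2_def)
qed

lemma christoffel_sym: "q \<in> U \<Longrightarrow> christoffel X q m l r = christoffel X q m r l"
  unfolding christoffel_def using smooth_on_pd_pd_commute_vec[OF U X_smooth] by simp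

lemma hess_fun_sym: "smooth_on U f \<Longrightarrow> q \<in> U \<Longrightarrow> hess_fun X f q l r = hess_fun X f q r l"
  unfolding hess_fun_def using smooth_on_pd_pd_commute[OF U, of f q l r] christoffel_sym by simp

lemma tan_der_commute:
  assumes f: "smooth_on U f" and q: "q \<in> U"
  shows "tan_der a (tan_der b f) q - tan_der b (tan_der a f) q =
     nu q $ a * (\<Sum>c\<in>UNIV. shape b c q * tan_der c f q) - nu q $ b * (\<Sum>c\<in>UNIV. shape a c q * tan_der c f q)"
  using sharp2_sym[of "hess_fun X f q" q a b] hess_fun_sym[OF f q] by (simp add: tan_der_tan_der[OF f q])

lemma laplacian_eq_tan_der:
  assumes f: "smooth_on U f" and q: "q \<in> U"
  shows "laplacian X f q = (\<Sum>a\<in>UNIV. tan_der a (tan_der a f) q)"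
proof -
  have "(\<Sum>a\<in>UNIV. nu q $ a * (\<Sum>c\<in>UNIV. shape a c q * tan_der c f q)) =
      (\<Sum>c\<in>UNIV. (\<Sum>a\<in>UNIV. nu q $ a * shape a c q) * tan_der c f q)"
    by (simp add: sum_distrib_left sum_distrib_right mult_ac) (rule sum.swap)
  also have "\<dots> = 0"
    by (simp add: shape_def nu_tan_der[OF q])
  finally show ?thesis
    by (simp add: tan_der_tan_der[OF f q] sum_subtractf sharp2_trace[OF q] laplacian_def)
qed

lemma laplacian_cong:
  assumes "\<forall>y\<in>U. f y = g y" "q \<in> U"
  shows "laplacian X f q = laplacian X g q"
proof -
  have 1: "\<forall>y\<in>U. pd j f y = pd j g y" for j
    using pd_cong_open[OF U _ assms(1)] by blast
  have 2: "pd i (pd j f) q = pd i (pd j g) q" for i j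
    by (rule pd_cong_open[OF U assms(2) 1])
  show ?thesis
    unfolding laplacian_def hess_fun_def using 1 assms(2) by (simp add: 2)
qed

end

section \<open>The shape operator and the Codazzi equation\<close>

context immersed_hypersurface
begin

text \<open>\<open>shape a c = \<delta>\<^sub>a \<nu>\<^sub>c\<close> is the shape operator in ambient coordinates; \<open>\<nabla>u\<close> for the Gauss map \<open>u = \<nu>\<close>
  is this same tensor, so \<open>|\<nabla>u|\<^sup>2\<close> is its squared norm.\<close>

definition shape_der :: "'m \<Rightarrow> 'm \<Rightarrow> 'm \<Rightarrow> real^'n \<Rightarrow> real" where
  "shape_der a b c = tan_der a (shape b c)"

definition shape_sq :: "'m \<Rightarrow> 'm \<Rightarrow> real^'n \<Rightarrow> real" where
  "shape_sq a b q = (\<Sum>d\<in>UNIV. shape a d q * shape d b q)"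

definition shape_norm2 :: "real^'n \<Rightarrow> real" where
  "shape_norm2 q = (\<Sum>a\<in>UNIV. \<Sum>c\<in>UNIV. shape a c q * shape a c q)"

definition shape_trace :: "real^'n \<Rightarrow> real" where
  "shape_trace q = (\<Sum>a\<in>UNIV. shape a a q)"

lemma smooth_on_shape_der: "smooth_on U (shape_der a b c)"
  unfolding shape_der_def by (intro smooth_on_tan_der smooth_on_shape)

lemma smooth_on_shape_mult: "smooth_on U (\<lambda>q. shape a b q * shape c d q)"
  by (intro smooth_on_mult[OF U] smooth_on_shape)

lemma smooth_on_shape_sq: "smooth_on U (shape_sq a b)"
  unfolding shape_sq_def[abs_def] by (intro smooth_on_sum[OF U] smooth_on_shape_mult) auto

lemma smooth_on_shape_norm2: "smooth_on U shape_norm2"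
  unfolding shape_norm2_def[abs_def] by (intro smooth_on_sum[OF U] smooth_on_shape_mult) auto

lemma smooth_on_shape_trace: "smooth_on U shape_trace"
  unfolding shape_trace_def[abs_def] by (intro smooth_on_sum[OF U] smooth_on_shape) auto

lemma pd_nu_inner_nu:
  assumes q: "q \<in> U"
  shows "pd l nu q \<bullet> nu q = 0"
proof -
  have "pd l (\<lambda>q. nu q \<bullet> nu q) q = pd l (\<lambda>q. 1) q"
    by (rule pd_cong_open[OF U q]) (use nu_inner_nu in auto)
  then have "pd l nu q \<bullet> nu q + nu q \<bullet> pd l nu q = 0"
    by (simp add: pd_inner smooth_on_differentiable_at[OF U nu_smooth q])
  then show ?thesis by (simp add: inner_commute)
qed

lemma pd_nu_inner_pd_X:
  assumes q: "q \<in> U"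
  shows "pd l nu q \<bullet> pd r X q = - (nu q \<bullet> pd l (pd r X) q)"
proof -
  have "pd l (\<lambda>q. nu q \<bullet> pd r X q) q = pd l (\<lambda>q. 0) q"
    by (rule pd_cong_open[OF U q]) (use nu_inner_pd_X in auto)
  then show ?thesis
    by (simp add: pd_inner smooth_on_differentiable_at[OF U nu_smooth q]
        smooth_on_differentiable_at[OF U smooth_on_pd_X q] add_eq_0_iff)
qed

lemma pd_nu_inner_pd_X_sym: "q \<in> U \<Longrightarrow> pd l nu q \<bullet> pd r X q = pd r nu q \<bullet> pd l X q"
  using smooth_on_pd_pd_commute_vec[OF U X_smooth, of q l r] by (simp add: pd_nu_inner_pd_X)

lemma shape_eq_sharp2:
  assumes q: "q \<in> U"
  shows "shape a c q = sharp2 q (\<lambda>l r. pd l nu q \<bullet> pd r X q) a c"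
proof -
  have "pd l nu q = sharp q (\<lambda>r. pd l nu q \<bullet> pd r X q)" for l
    using tangent_normal_sharp[OF q, of "pd l nu q"] pd_nu_inner_nu[OF q] by simp
  then show ?thesis
    unfolding shape_eq_sharp[OF q] sharp2_def by simp
qed

lemma shape_sym: "q \<in> U \<Longrightarrow> shape a c q = shape c a q"
  unfolding shape_eq_sharp2 by (rule sharp2_sym[OF pd_nu_inner_pd_X_sym])

lemma nu_shape: "q \<in> U \<Longrightarrow> (\<Sum>a\<in>UNIV. nu q $ a * shape a c q) = 0"
  unfolding shape_def by (rule nu_tan_der)

lemma shape_nu: "q \<in> U \<Longrightarrow> (\<Sum>c\<in>UNIV. shape a c q * nu q $ c) = 0"
  using nu_shape[of q a] by (simp add: shape_sym[of q a] mult.commute)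

lemma energy_density_eq_shape_norm2:
  assumes q: "q \<in> U"
  shows "energy_density X nu q = shape_norm2 q"
proof -
  have "shape_norm2 q = (\<Sum>c\<in>UNIV. \<Sum>a\<in>UNIV. shape a c q * shape a c q)"
    unfolding shape_norm2_def by (rule sum.swap)
  also have "\<dots> = (\<Sum>c\<in>UNIV. \<Sum>l\<in>UNIV. \<Sum>l'\<in>UNIV. ginv X q l l' * (pd l nu q $ c * pd l' nu q $ c))"
    by (simp add: shape_eq_sharp[OF q] sum_mult_component_eq_inner sharp_inner_sharp[OF q] mult_ac)
  also have "\<dots> = (\<Sum>l\<in>UNIV. \<Sum>l'\<in>UNIV. ginv X q l l' * (pd l nu q \<bullet> pd l' nu q))"
    by (subst sum.swap, rule sum.cong[OF refl], subst sum.swap) (simp add: inner_vec_def sum_distrib_left)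
  finally show ?thesis unfolding energy_density_def by simp
qed

lemma mean_curv_eq_shape_trace:
  assumes q: "q \<in> U"
  shows "mean_curv X nu q = shape_trace q"
proof -
  have "shape_trace q =
      (\<Sum>a\<in>UNIV. \<Sum>k\<in>UNIV. \<Sum>l\<in>UNIV. ginv X q k l * (pd l nu q $ a * pd k X q $ a))"
    by (simp add: shape_trace_def shape_eq_sharp[OF q] sharp_component mult_ac)
  also have "\<dots> = (\<Sum>k\<in>UNIV. \<Sum>l\<in>UNIV. ginv X q k l * (pd l nu q \<bullet> pd k X q))"
    by (subst sum.swap, rule sum.cong[OF refl], subst sum.swap) (simp add: inner_vec_def sum_distrib_left)
  also have "\<dots> = mean_curv X nu q"
    unfolding mean_curv_def by (subst sum.swap) (simp add: ginv_sym[OF q, of _ l for l])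
  finally show ?thesis ..
qed

lemma tangential_part_inner_grad_fun:
  assumes q: "q \<in> U"
  shows "tangential_part X T q \<bullet> grad_fun X f q = (\<Sum>d\<in>UNIV. T $ d * tan_der d f q)"
proof -
  have "tangential_part X T q = T - (T \<bullet> nu q) *\<^sub>R nu q"
    using tangent_normal_decomposition[OF q, of T] unfolding tangential_part_def by (simp add: algebra_simps)
  then have "tangential_part X T q \<bullet> grad_fun X f q = T \<bullet> grad_fun X f q"
    using sharp_inner_nu[OF q] by (simp add: inner_diff_left grad_fun_eq_sharp inner_commute[of "nu q"])
  then show ?thesis by (simp add: inner_vec_def tan_der_def)
qed

lemma shape_der_sym: "q \<in> U \<Longrightarrow> shape_der a b c q = shape_der a c b q"
  unfolding shape_der_def by (rule tan_der_cong) (use shape_sym in auto)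

lemma nu_shape_der:
  assumes q: "q \<in> U"
  shows "(\<Sum>b\<in>UNIV. nu q $ b * shape_der a b c q) = - shape_sq a c q"
proof -
  have "tan_der a (\<lambda>y. \<Sum>b\<in>UNIV. nu y $ b * shape b c y) q = tan_der a (\<lambda>y. 0) q"
    by (rule tan_der_cong[OF _ q]) (use nu_shape in auto)
  then have "(\<Sum>b\<in>UNIV. tan_der a (\<lambda>y. nu y $ b * shape b c y) q) = 0"
    using tan_der_sum[of UNIV "\<lambda>b y. nu y $ b * shape b c y" q a] q
    by (simp add: smooth_on_mult[OF U] smooth_on_nu_component smooth_on_shape tan_der_const)
  then have "(\<Sum>b\<in>UNIV. shape a b q * shape b c q + nu q $ b * shape_der a b c q) = 0"
    by (simp add: tan_der_mult[OF smooth_on_nu_component smooth_on_shape q] shape_der_def shape_def[symmetric])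
  then show ?thesis by (simp add: sum.distrib shape_sq_def)
qed

lemma codazzi:
  assumes q: "q \<in> U"
  shows "shape_der a b c q = shape_der b a c q + nu q $ a * shape_sq b c q - nu q $ b * shape_sq a c q"
proof -
  have "tan_der b (\<lambda>q. nu q $ c) = shape b c" for b c
    by (simp add: shape_def[abs_def])
  then show ?thesis
    using tan_der_commute[OF smooth_on_nu_component q, of a b c]
    by (simp add: shape_der_def shape_sq_def algebra_simps)
qed

lemma nu_shape_sq:
  assumes q: "q \<in> U"
  shows "(\<Sum>a\<in>UNIV. nu q $ a * shape_sq c a q) = 0"
proof -
  have "(\<Sum>a\<in>UNIV. nu q $ a * shape_sq c a q) = (\<Sum>d\<in>UNIV. shape c d q * (\<Sum>a\<in>UNIV. shape d a q * nu q $ a))"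
    unfolding shape_sq_def by (simp add: sum_distrib_left sum_distrib_right mult_ac) (rule sum.swap)
  then show ?thesis by (simp add: shape_nu[OF q])
qed

lemma trace_shape_der:
  assumes q: "q \<in> U"
  shows "(\<Sum>a\<in>UNIV. shape_der a a c q) = tan_der c shape_trace q - nu q $ c * shape_norm2 q"
proof -
  have "(\<Sum>a\<in>UNIV. shape_der a a c q) = (\<Sum>a\<in>UNIV. shape_der a c a q)"
    by (simp add: shape_der_sym[OF q])
  also have "\<dots> = (\<Sum>a\<in>UNIV. shape_der c a a q) + (\<Sum>a\<in>UNIV. nu q $ a * shape_sq c a q)
      - nu q $ c * (\<Sum>a\<in>UNIV. shape_sq a a q)"
    by (simp add: codazzi[OF q, of _ c] sum.distrib sum_subtractf sum_distrib_left)
  also have "(\<Sum>a\<in>UNIV. shape_der c a a q) = tan_der c shape_trace q"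
    unfolding shape_trace_def[abs_def] shape_der_def
    using tan_der_sum[of UNIV "\<lambda>a. shape a a" q c] q smooth_on_shape by simp
  also have "(\<Sum>a\<in>UNIV. shape_sq a a q) = shape_norm2 q"
    unfolding shape_sq_def shape_norm2_def by (simp add: shape_sym[OF q, of _ a for a])
  finally show ?thesis by (simp add: nu_shape_sq[OF q])
qed

lemma tan_der_shape_norm2:
  assumes q: "q \<in> U"
  shows "tan_der a shape_norm2 q = 2 * (\<Sum>b\<in>UNIV. \<Sum>c\<in>UNIV. shape b c q * shape_der a b c q)"
proof -
  have "tan_der a shape_norm2 q = (\<Sum>b\<in>UNIV. \<Sum>c\<in>UNIV. tan_der a (\<lambda>y. shape b c y * shape b c y) q)"
    unfolding shape_norm2_def[abs_def]
    using q by (simp add: tan_der_sum smooth_on_sum[OF U] smooth_on_shape_mult)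
  also have "\<dots> = (\<Sum>b\<in>UNIV. \<Sum>c\<in>UNIV. 2 * (shape b c q * shape_der a b c q))"
    by (simp add: tan_der_mult[OF smooth_on_shape smooth_on_shape q] shape_der_def)
  finally show ?thesis by (simp add: sum_distrib_left)
qed

lemma tan_der_shape_trace_soliton:
  assumes soliton: "\<forall>q\<in>U. T \<bullet> nu q = - mean_curv X nu q" and q: "q \<in> U"
  shows "tan_der c shape_trace q = - (\<Sum>d\<in>UNIV. T $ d * shape c d q)"
proof -
  have "tan_der c shape_trace q = tan_der c (\<lambda>y. \<Sum>d\<in>UNIV. - T $ d * nu y $ d) q"
    by (rule tan_der_cong[OF _ q])
      (use soliton mean_curv_eq_shape_trace in \<open>auto simp: inner_vec_def sum_negf\<close>)
  also have "\<dots> = (\<Sum>d\<in>UNIV. tan_der c (\<lambda>y. - T $ d * nu y $ d) q)"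
    by (intro tan_der_sum[OF _ _ q] smooth_on_mult[OF U] smooth_on_const[OF U] smooth_on_nu_component)
      simp
  also have "\<dots> = (\<Sum>d\<in>UNIV. - T $ d * shape c d q)"
    by (simp only: tan_der_cmult[OF smooth_on_nu_component q] shape_def[symmetric])
  finally show ?thesis by (simp add: sum_negf)
qed

end

lemma sum_square_shifted_tensor:
  fixes n :: "'m::finite \<Rightarrow> real" and R :: "'m \<Rightarrow> 'm \<Rightarrow> real" and C :: "'m \<Rightarrow> 'm \<Rightarrow> 'm \<Rightarrow> real"
  assumes n_C: "\<And>a c. (\<Sum>b\<in>UNIV. n b * C a b c) = - R a c"
    and C_sym: "\<And>a b c. C a b c = C a c b"
    and n_R: "\<And>c. (\<Sum>a\<in>UNIV. n a * R c a) = 0"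
    and n_unit: "(\<Sum>a\<in>UNIV. n a * n a) = 1"
  shows "(\<Sum>a\<in>UNIV. \<Sum>b\<in>UNIV. \<Sum>c\<in>UNIV.
      (C a b c + n b * R a c + R a b * n c) * (C a b c + n b * R a c + R a b * n c)) =
    (\<Sum>a\<in>UNIV. \<Sum>b\<in>UNIV. \<Sum>c\<in>UNIV. C a b c * C a b c) - 2 * (\<Sum>a\<in>UNIV. \<Sum>c\<in>UNIV. R a c * R a c)"
proof -
  define Q where "Q = (\<Sum>a\<in>UNIV. \<Sum>c\<in>UNIV. R a c * R a c)"
  have C_n: "\<And>a b. (\<Sum>c\<in>UNIV. C a b c * n c) = - R a b"
    using n_C by (simp add: C_sym[of _ _ b for b] mult.commute)
  have square: "\<And>x y z :: real. (x + y + z) * (x + y + z) =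
      x * x + y * y + z * z + 2 * (x * y) + 2 * (x * z) + 2 * (y * z)"
    by (simp add: algebra_simps)
  have sxy: "(\<Sum>a\<in>UNIV. \<Sum>b\<in>UNIV. \<Sum>c\<in>UNIV. C a b c * (n b * R a c)) = - Q"
  proof -
    have "(\<Sum>a\<in>UNIV. \<Sum>b\<in>UNIV. \<Sum>c\<in>UNIV. C a b c * (n b * R a c)) =
        (\<Sum>a\<in>UNIV. \<Sum>c\<in>UNIV. R a c * (\<Sum>b\<in>UNIV. n b * C a b c))"
      by (subst sum_swap_middle) (simp add: sum_distrib_left mult_ac)
    also have "\<dots> = - Q" by (simp add: n_C Q_def sum_negf)
    finally show ?thesis .
  qed
  have sxz: "(\<Sum>a\<in>UNIV. \<Sum>b\<in>UNIV. \<Sum>c\<in>UNIV. C a b c * (R a b * n c)) = - Q"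
  proof -
    have "(\<Sum>a\<in>UNIV. \<Sum>b\<in>UNIV. \<Sum>c\<in>UNIV. C a b c * (R a b * n c)) =
        (\<Sum>a\<in>UNIV. \<Sum>b\<in>UNIV. R a b * (\<Sum>c\<in>UNIV. C a b c * n c))"
      by (simp add: sum_distrib_left mult_ac)
    also have "\<dots> = - Q" by (simp add: C_n Q_def sum_negf)
    finally show ?thesis .
  qed
  have syy: "(\<Sum>a\<in>UNIV. \<Sum>b\<in>UNIV. \<Sum>c\<in>UNIV. (n b * R a c) * (n b * R a c)) = Q"
  proof -
    have "(\<Sum>a\<in>UNIV. \<Sum>b\<in>UNIV. \<Sum>c\<in>UNIV. (n b * R a c) * (n b * R a c)) =
        (\<Sum>a\<in>UNIV. \<Sum>c\<in>UNIV. \<Sum>b\<in>UNIV. (R a c * R a c) * (n b * n b))"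
      by (subst sum_swap_middle) (simp add: mult_ac)
    also have "\<dots> = (\<Sum>a\<in>UNIV. \<Sum>c\<in>UNIV. (R a c * R a c) * (\<Sum>b\<in>UNIV. n b * n b))"
      by (simp only: sum_distrib_left)
    also have "\<dots> = Q" by (simp add: n_unit Q_def)
    finally show ?thesis .
  qed
  have szz: "(\<Sum>a\<in>UNIV. \<Sum>b\<in>UNIV. \<Sum>c\<in>UNIV. (R a b * n c) * (R a b * n c)) = Q"
  proof -
    have "(\<Sum>a\<in>UNIV. \<Sum>b\<in>UNIV. \<Sum>c\<in>UNIV. (R a b * n c) * (R a b * n c)) =
        (\<Sum>a\<in>UNIV. \<Sum>b\<in>UNIV. (R a b * R a b) * (\<Sum>c\<in>UNIV. n c * n c))"
      by (simp add: sum_distrib_left mult_ac)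
    also have "\<dots> = Q" by (simp add: n_unit Q_def)
    finally show ?thesis .
  qed
  have syz: "(\<Sum>a\<in>UNIV. \<Sum>b\<in>UNIV. \<Sum>c\<in>UNIV. (n b * R a c) * (R a b * n c)) = 0"
  proof -
    have "(\<Sum>a\<in>UNIV. \<Sum>b\<in>UNIV. \<Sum>c\<in>UNIV. (n b * R a c) * (R a b * n c)) =
        (\<Sum>a\<in>UNIV. (\<Sum>b\<in>UNIV. n b * R a b) * (\<Sum>c\<in>UNIV. n c * R a c))"
      by (simp add: sum_distrib_left sum_distrib_right mult_ac)
    also have "\<dots> = 0" by (simp add: n_R)
    finally show ?thesis .
  qed
  show ?thesis
    unfolding square sum.distrib sum_distrib_left[symmetric] sxy sxz syy szz syz Q_def[symmetric]
    by simp
qed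


lemma sum_contract_rotated:
  fixes n T :: "'m::finite \<Rightarrow> real" and s R :: "'m \<Rightarrow> 'm \<Rightarrow> real" and C :: "'m \<Rightarrow> 'm \<Rightarrow> 'm \<Rightarrow> real"
  assumes n_s: "\<And>c. (\<Sum>b\<in>UNIV. n b * s b c) = 0"
    and rotate: "\<And>b c d. C b c d = C d b c + n b * R d c - n d * R b c"
    and T_n: "(\<Sum>d\<in>UNIV. T d * n d) = - H"
  shows "(\<Sum>b\<in>UNIV. \<Sum>c\<in>UNIV. s b c * (\<Sum>d\<in>UNIV. T d * C b c d)) =
    (\<Sum>d\<in>UNIV. T d * (\<Sum>b\<in>UNIV. \<Sum>c\<in>UNIV. s b c * C d b c))
    + H * (\<Sum>b\<in>UNIV. \<Sum>c\<in>UNIV. s b c * R b c)"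
proof -
  have "(\<Sum>b\<in>UNIV. \<Sum>c\<in>UNIV. s b c * (\<Sum>d\<in>UNIV. T d * C b c d)) =
      (\<Sum>b\<in>UNIV. \<Sum>c\<in>UNIV. \<Sum>d\<in>UNIV. T d * (s b c * C d b c))
    + (\<Sum>b\<in>UNIV. \<Sum>c\<in>UNIV. \<Sum>d\<in>UNIV. T d * (R d c * (n b * s b c)))
    - (\<Sum>b\<in>UNIV. \<Sum>c\<in>UNIV. \<Sum>d\<in>UNIV. (T d * n d) * (s b c * R b c))"
    by (simp only: sum_distrib_left sum.distrib[symmetric] sum_subtractf[symmetric])
      (intro sum.cong refl, subst rotate, simp add: algebra_simps)
  also have "(\<Sum>b\<in>UNIV. \<Sum>c\<in>UNIV. \<Sum>d\<in>UNIV. T d * (s b c * C d b c)) =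
      (\<Sum>d\<in>UNIV. \<Sum>b\<in>UNIV. \<Sum>c\<in>UNIV. T d * (s b c * C d b c))"
    by (subst (2) sum.swap, rule sum.cong[OF refl], rule sum.swap)
  also have "\<dots> = (\<Sum>d\<in>UNIV. T d * (\<Sum>b\<in>UNIV. \<Sum>c\<in>UNIV. s b c * C d b c))"
    by (simp only: sum_distrib_left)
  also have "(\<Sum>b\<in>UNIV. \<Sum>c\<in>UNIV. \<Sum>d\<in>UNIV. T d * (R d c * (n b * s b c))) =
      (\<Sum>c\<in>UNIV. \<Sum>d\<in>UNIV. T d * (R d c * (\<Sum>b\<in>UNIV. n b * s b c)))"
    by (subst sum.swap, rule sum.cong[OF refl], subst sum.swap) (simp only: sum_distrib_left)
  also have "(\<Sum>b\<in>UNIV. \<Sum>c\<in>UNIV. \<Sum>d\<in>UNIV. (T d * n d) * (s b c * R b c)) =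
      - H * (\<Sum>b\<in>UNIV. \<Sum>c\<in>UNIV. s b c * R b c)"
    by (simp only: sum_distrib_right[symmetric] T_n sum_distrib_left[symmetric])
  finally show ?thesis by (simp add: n_s)
qed

lemma sum_shape_shape_n_C:
  fixes n :: "'m::finite \<Rightarrow> real" and s R :: "'m \<Rightarrow> 'm \<Rightarrow> real" and C :: "'m \<Rightarrow> 'm \<Rightarrow> 'm \<Rightarrow> real"
  assumes s_sym: "\<And>a b. s a b = s b a"
    and n_C: "\<And>a c. (\<Sum>b\<in>UNIV. n b * C a b c) = - R a c"
    and R_def: "\<And>a b. R a b = (\<Sum>d\<in>UNIV. s a d * s d b)"
  shows "(\<Sum>b\<in>UNIV. \<Sum>c\<in>UNIV. s b c * (\<Sum>d\<in>UNIV. s b d * (\<Sum>a\<in>UNIV. n a * C d a c))) =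
    - (\<Sum>a\<in>UNIV. \<Sum>c\<in>UNIV. R a c * R a c)"
proof -
  have ss: "(\<Sum>b\<in>UNIV. s b d * s b c) = R d c" for d c
    unfolding R_def by (rule sum.cong[OF refl]) (metis s_sym)
  have "(\<Sum>b\<in>UNIV. \<Sum>c\<in>UNIV. s b c * (\<Sum>d\<in>UNIV. s b d * (\<Sum>a\<in>UNIV. n a * C d a c))) =
      (\<Sum>b\<in>UNIV. \<Sum>c\<in>UNIV. \<Sum>d\<in>UNIV. (s b d * s b c) * (- R d c))"
    by (simp add: n_C sum_distrib_left mult_ac)
  also have "\<dots> = (\<Sum>c\<in>UNIV. \<Sum>d\<in>UNIV. \<Sum>b\<in>UNIV. (s b d * s b c) * (- R d c))"
    by (subst sum.swap, rule sum.cong[OF refl], rule sum.swap)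
  also have "\<dots> = (\<Sum>c\<in>UNIV. \<Sum>d\<in>UNIV. R d c * (- R d c))"
    by (simp only: sum_distrib_right[symmetric] ss)
  also have "\<dots> = - (\<Sum>a\<in>UNIV. \<Sum>c\<in>UNIV. R a c * R a c)"
    by (subst sum.swap) (simp add: sum_negf)
  finally show ?thesis .
qed

lemma sum_shape_shape_R:
  fixes s R :: "'m::finite \<Rightarrow> 'm \<Rightarrow> real"
  assumes s_sym: "\<And>a b. s a b = s b a"
    and R_def: "\<And>a b. R a b = (\<Sum>d\<in>UNIV. s a d * s d b)"
  shows "(\<Sum>b\<in>UNIV. \<Sum>c\<in>UNIV. s b c * (\<Sum>a\<in>UNIV. s a b * R a c)) = (\<Sum>a\<in>UNIV. \<Sum>c\<in>UNIV. R a c * R a c)"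
proof -
  have ss: "(\<Sum>b\<in>UNIV. s b d * s b c) = R d c" for d c
    unfolding R_def by (rule sum.cong[OF refl]) (metis s_sym)
  have "(\<Sum>b\<in>UNIV. \<Sum>c\<in>UNIV. s b c * (\<Sum>a\<in>UNIV. s a b * R a c)) =
      (\<Sum>b\<in>UNIV. \<Sum>c\<in>UNIV. \<Sum>a\<in>UNIV. (s b a * s b c) * R a c)"
    by (simp add: sum_distrib_left s_sym[of _ b for b] mult_ac)
  also have "\<dots> = (\<Sum>c\<in>UNIV. \<Sum>a\<in>UNIV. \<Sum>b\<in>UNIV. (s b a * s b c) * R a c)"
    by (subst sum.swap, rule sum.cong[OF refl], rule sum.swap)
  also have "\<dots> = (\<Sum>c\<in>UNIV. \<Sum>a\<in>UNIV. R a c * R a c)"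
    by (simp only: sum_distrib_right[symmetric] ss)
  also have "\<dots> = (\<Sum>a\<in>UNIV. \<Sum>c\<in>UNIV. R a c * R a c)"
    by (rule sum.swap)
  finally show ?thesis .
qed

text \<open>Read with \<open>n = \<nu>\<close>, \<open>s = A\<close>, \<open>R = A\<^sup>2\<close>, \<open>C = \<delta>A\<close>, \<open>DC = \<delta>\<delta>A\<close>, \<open>E = |A|\<^sup>2\<close>, \<open>H = tr A\<close> and
  \<open>DE = \<delta>|A|\<^sup>2\<close>, the hypotheses are the identities of the shape operator and the conclusion computes
  \<open>\<Sum>\<^sub>a \<delta>\<^sub>a\<delta>\<^sub>a |A|\<^sup>2\<close>; \<open>Y\<close> and \<open>Z\<close> stand for normal terms that drop out.\<close>
lemma simons_contraction:
  fixes n T DE Y Z :: "'m::finite \<Rightarrow> real" and s R :: "'m \<Rightarrow> 'm \<Rightarrow> real"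
    and C DC :: "'m \<Rightarrow> 'm \<Rightarrow> 'm \<Rightarrow> real" and E H :: real
  assumes s_sym: "\<And>a b. s a b = s b a"
    and s_n: "\<And>a. (\<Sum>c\<in>UNIV. s a c * n c) = 0"
    and codazzi: "\<And>a b c. C a b c = C b a c + n a * R b c - n b * R a c"
    and C_sym: "\<And>a b c. C a b c = C a c b"
    and n_C: "\<And>a c. (\<Sum>b\<in>UNIV. n b * C a b c) = - R a c"
    and R_def: "\<And>a b. R a b = (\<Sum>d\<in>UNIV. s a d * s d b)"
    and E_def: "E = (\<Sum>a\<in>UNIV. \<Sum>c\<in>UNIV. s a c * s a c)"
    and T_n: "(\<Sum>d\<in>UNIV. T d * n d) = - H"
    and DE_def: "\<And>d. DE d = 2 * (\<Sum>b\<in>UNIV. \<Sum>c\<in>UNIV. s b c * C d b c)"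
    and div_C: "\<And>b c. (\<Sum>a\<in>UNIV. DC a b c) = - (\<Sum>d\<in>UNIV. T d * C b c d) - s b c * E
        + (\<Sum>d\<in>UNIV. s b d * (\<Sum>a\<in>UNIV. n a * C d a c)) + H * R b c - (\<Sum>a\<in>UNIV. s a b * R a c)
        + n b * Y c + n c * Z b"
  shows "(\<Sum>a\<in>UNIV. 2 * (\<Sum>b\<in>UNIV. \<Sum>c\<in>UNIV. C a b c * C a b c + s b c * DC a b c))
    = 2 * (\<Sum>a\<in>UNIV. \<Sum>b\<in>UNIV. \<Sum>c\<in>UNIV. C a b c * C a b c) - (\<Sum>d\<in>UNIV. T d * DE d)
      - 2 * (E * E) - 4 * (\<Sum>a\<in>UNIV. \<Sum>c\<in>UNIV. R a c * R a c)"
proof -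
  define Q where "Q = (\<Sum>a\<in>UNIV. \<Sum>c\<in>UNIV. R a c * R a c)"
  define SR where "SR = (\<Sum>b\<in>UNIV. \<Sum>c\<in>UNIV. s b c * R b c)"
  define TD where "TD = (\<Sum>d\<in>UNIV. T d * DE d)"
  have n_s: "(\<Sum>b\<in>UNIV. n b * s b c) = 0" for c
    using s_n[of c] by (simp add: s_sym[of _ c] mult.commute)
  have normal_terms: "(\<Sum>b\<in>UNIV. \<Sum>c\<in>UNIV. s b c * (n b * Y c + n c * Z b)) = 0"
  proof -
    have "(\<Sum>b\<in>UNIV. \<Sum>c\<in>UNIV. s b c * (n b * Y c + n c * Z b))
       = (\<Sum>c\<in>UNIV. Y c * (\<Sum>b\<in>UNIV. n b * s b c)) + (\<Sum>b\<in>UNIV. Z b * (\<Sum>c\<in>UNIV. s b c * n c))"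
      by (simp add: sum.distrib distrib_left sum_distrib_left mult_ac) (rule sum.swap)
    then show ?thesis by (simp add: n_s s_n)
  qed
  have T_terms: "(\<Sum>b\<in>UNIV. \<Sum>c\<in>UNIV. s b c * (\<Sum>d\<in>UNIV. T d * C b c d)) = TD / 2 + H * SR"
  proof -
    have "\<And>b c d. C b c d = C d b c + n b * R d c - n d * R b c"
      using C_sym codazzi by metis
    from sum_contract_rotated[OF n_s this T_n] show ?thesis
      by (simp add: TD_def DE_def SR_def sum_divide_distrib)
  qed
  have "(\<Sum>a\<in>UNIV. \<Sum>b\<in>UNIV. \<Sum>c\<in>UNIV. s b c * DC a b c) =
      (\<Sum>b\<in>UNIV. \<Sum>c\<in>UNIV. s b c * (\<Sum>a\<in>UNIV. DC a b c))"
    by (simp add: sum_distrib_left) (subst sum.swap, rule sum.cong[OF refl], rule sum.swap)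
  also have "\<dots> = (\<Sum>b\<in>UNIV. \<Sum>c\<in>UNIV. - (s b c * (\<Sum>d\<in>UNIV. T d * C b c d)) - s b c * (s b c * E)
      + s b c * (\<Sum>d\<in>UNIV. s b d * (\<Sum>a\<in>UNIV. n a * C d a c)) + H * (s b c * R b c)
      - s b c * (\<Sum>a\<in>UNIV. s a b * R a c) + s b c * (n b * Y c + n c * Z b))"
    by (intro sum.cong refl) (simp only: div_C, simp add: algebra_simps)
  also have "\<dots> = - (\<Sum>b\<in>UNIV. \<Sum>c\<in>UNIV. s b c * (\<Sum>d\<in>UNIV. T d * C b c d))
      - (\<Sum>b\<in>UNIV. \<Sum>c\<in>UNIV. s b c * (s b c * E))
      + (\<Sum>b\<in>UNIV. \<Sum>c\<in>UNIV. s b c * (\<Sum>d\<in>UNIV. s b d * (\<Sum>a\<in>UNIV. n a * C d a c)))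
      + H * SR
      - (\<Sum>b\<in>UNIV. \<Sum>c\<in>UNIV. s b c * (\<Sum>a\<in>UNIV. s a b * R a c))
      + (\<Sum>b\<in>UNIV. \<Sum>c\<in>UNIV. s b c * (n b * Y c + n c * Z b))"
    by (simp only: sum.distrib sum_subtractf sum_negf SR_def sum_distrib_left)
  also have "\<dots> = - (TD / 2) - E * E - 2 * Q"
    unfolding T_terms normal_terms sum_shape_shape_n_C[OF s_sym n_C R_def] sum_shape_shape_R[OF s_sym R_def]
    by (simp add: E_def sum_distrib_right mult_ac Q_def)
  finally show ?thesis
    unfolding TD_def[symmetric] Q_def[symmetric] by (simp add: sum.distrib sum_distrib_left[symmetric])
qed

section \<open>The Simons-type identity\<close>

context immersed_hypersurface
begin

lemma nu_smooth_upto_2: "smooth_upto 2 U nu"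
  using nu_smooth unfolding smooth_on_iff_smooth_upto by blast

lemma sff_map_component:
  assumes q: "q \<in> U"
  shows "sff_map X nu q i j $ c = hess_fun X (\<lambda>q. nu q $ c) q i j
     - (\<Sum>c'\<in>UNIV. hess_fun X (\<lambda>q. nu q $ c') q i j * nu q $ c') * nu q $ c"
proof -
  define w where "w = pd i (pd j nu) q"
  have hess: "hess_fun X (\<lambda>q. nu q $ c) q i j = w $ c - (\<Sum>k\<in>UNIV. christoffel X q k i j * pd k nu q $ c)"
    for c
    unfolding hess_fun_def w_def
    by (simp add: pd_pd_component[OF U nu_smooth_upto_2 q]
        pd_component[OF smooth_on_differentiable_at[OF U nu_smooth q]])
  have "(\<Sum>c'\<in>UNIV. hess_fun X (\<lambda>q. nu q $ c') q i j * nu q $ c') =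
      w \<bullet> nu q - (\<Sum>c'\<in>UNIV. \<Sum>k\<in>UNIV. christoffel X q k i j * (pd k nu q $ c' * nu q $ c'))"
    unfolding hess
    by (simp add: inner_vec_def sum_subtractf right_diff_distrib left_diff_distrib sum_distrib_left
        sum_distrib_right mult_ac)
  also have "(\<Sum>c'\<in>UNIV. \<Sum>k\<in>UNIV. christoffel X q k i j * (pd k nu q $ c' * nu q $ c')) =
      (\<Sum>k\<in>UNIV. christoffel X q k i j * (pd k nu q \<bullet> nu q))"
    by (subst sum.swap) (simp add: inner_vec_def sum_distrib_left)
  finally have "(\<Sum>c'\<in>UNIV. hess_fun X (\<lambda>q. nu q $ c') q i j * nu q $ c') = w \<bullet> nu q"
    by (simp add: pd_nu_inner_nu[OF q])
  then show ?thesis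
    unfolding sff_map_def hess w_def Let_def by (simp add: sum_component)
qed

definition hess_nu :: "real^'n \<Rightarrow> 'm \<Rightarrow> 'm \<Rightarrow> 'm \<Rightarrow> real" where
  "hess_nu q a b c = sharp2 q (hess_fun X (\<lambda>q. nu q $ c) q) a b"

lemma hess_nu_eq:
  assumes q: "q \<in> U"
  shows "hess_nu q a b c = shape_der a b c q + nu q $ b * shape_sq a c q"
proof -
  have "tan_der d (\<lambda>q. nu q $ c) = shape d c" for d c
    by (simp add: shape_def[abs_def])
  then show ?thesis
    using tan_der_tan_der[OF smooth_on_nu_component q, of a b c]
    by (simp add: hess_nu_def shape_der_def shape_sq_def)
qed

lemma sff_map_norm2_eq_hess_nu:
  assumes q: "q \<in> U"
  shows "sff_map_norm2 X nu q = (\<Sum>a\<in>UNIV. \<Sum>b\<in>UNIV. \<Sum>c\<in>UNIV.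
     (hess_nu q a b c - (\<Sum>c'\<in>UNIV. hess_nu q a b c' * nu q $ c') * nu q $ c) *
     (hess_nu q a b c - (\<Sum>c'\<in>UNIV. hess_nu q a b c' * nu q $ c') * nu q $ c))"
proof -
  define W where "W c i j = sff_map X nu q i j $ c" for c i j
  have W_sharp: "sharp2 q (W c) a b = hess_nu q a b c - (\<Sum>c'\<in>UNIV. hess_nu q a b c' * nu q $ c') * nu q $ c"
    for a b c
  proof -
    have "W c = (\<lambda>i j. hess_fun X (\<lambda>q. nu q $ c) q i j
        - (\<Sum>c'\<in>UNIV. hess_fun X (\<lambda>q. nu q $ c') q i j * nu q $ c') * nu q $ c)"
      by (intro ext) (simp add: W_def sff_map_component[OF q])
    then show ?thesis
      by (simp add: sharp2_diff sharp2_scale sharp2_sum hess_nu_def)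
  qed
  have "sff_map_norm2 X nu q = (\<Sum>i\<in>UNIV. \<Sum>j\<in>UNIV. \<Sum>k\<in>UNIV. \<Sum>l\<in>UNIV. \<Sum>c\<in>UNIV.
       ginv X q i k * ginv X q j l * W c i j * W c k l)"
    unfolding sff_map_norm2_def W_def by (simp add: inner_vec_def sum_distrib_left mult_ac)
  also have "\<dots> = (\<Sum>c\<in>UNIV. \<Sum>i\<in>UNIV. \<Sum>j\<in>UNIV. \<Sum>k\<in>UNIV. \<Sum>l\<in>UNIV.
       ginv X q i k * ginv X q j l * W c i j * W c k l)"
    by (rule sum_swap_first_to_last[symmetric])
  also have "\<dots> = (\<Sum>c\<in>UNIV. \<Sum>a\<in>UNIV. \<Sum>b\<in>UNIV. sharp2 q (W c) a b * sharp2 q (W c) a b)"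
    by (simp add: sharp2_inner[OF q])
  also have "\<dots> = (\<Sum>a\<in>UNIV. \<Sum>b\<in>UNIV. \<Sum>c\<in>UNIV. sharp2 q (W c) a b * sharp2 q (W c) a b)"
    by (subst sum.swap, rule sum.cong[OF refl], rule sum.swap)
  finally show ?thesis by (simp add: W_sharp)
qed

text \<open>In ambient coordinates \<open>\<nabla>du\<close> is \<open>C\<^sub>a\<^sub>b\<^sub>c + \<nu>\<^sub>b A\<^sup>2\<^sub>a\<^sub>c + A\<^sup>2\<^sub>a\<^sub>b \<nu>\<^sub>c\<close> with \<open>C = \<delta>A\<close>; the two
  correction terms are what produce \<open>-2|A\<^sup>2|\<^sup>2\<close>.\<close>
lemma sff_map_norm2_eq:
  assumes p: "p \<in> U"
  shows "sff_map_norm2 X nu p = (\<Sum>a\<in>UNIV. \<Sum>b\<in>UNIV. \<Sum>c\<in>UNIV. shape_der a b c p * shape_der a b c p)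
     - 2 * (\<Sum>a\<in>UNIV. \<Sum>c\<in>UNIV. shape_sq a c p * shape_sq a c p)"
proof -
  have C_nu: "(\<Sum>c'\<in>UNIV. shape_der a b c' p * nu p $ c') = - shape_sq a b p" for a b
    using nu_shape_der[OF p, of a b] by (simp add: shape_der_sym[OF p, of a b] mult.commute)
  have sq_nu: "(\<Sum>c'\<in>UNIV. shape_sq a c' p * nu p $ c') = 0" for a
    using nu_shape_sq[OF p, of a] by (simp add: mult.commute)
  have "(\<Sum>c'\<in>UNIV. hess_nu p a b c' * nu p $ c') = (\<Sum>c'\<in>UNIV. shape_der a b c' p * nu p $ c')
      + nu p $ b * (\<Sum>c'\<in>UNIV. shape_sq a c' p * nu p $ c')" for a b
    by (simp add: hess_nu_eq[OF p] algebra_simps sum.distrib sum_distrib_left)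
  then have "(\<Sum>c'\<in>UNIV. hess_nu p a b c' * nu p $ c') = - shape_sq a b p" for a b
    by (simp add: C_nu sq_nu)
  then have W: "hess_nu p a b c - (\<Sum>c'\<in>UNIV. hess_nu p a b c' * nu p $ c') * nu p $ c =
      shape_der a b c p + nu p $ b * shape_sq a c p + shape_sq a b p * nu p $ c" for a b c
    by (simp add: hess_nu_eq[OF p])
  have "(\<Sum>a\<in>UNIV. nu p $ a * nu p $ a) = 1"
    using nu_inner_nu[OF p] by (simp add: inner_vec_def)
  then show ?thesis
    unfolding sff_map_norm2_eq_hess_nu[OF p] W
    by (intro sum_square_shifted_tensor nu_shape_der[OF p] shape_der_sym[OF p] nu_shape_sq[OF p])
qed

lemma tan_der_tan_der_shape_norm2:
  assumes q: "q \<in> U"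
  shows "tan_der a (tan_der a shape_norm2) q = 2 * (\<Sum>b\<in>UNIV. \<Sum>c\<in>UNIV.
    shape_der a b c q * shape_der a b c q + shape b c q * tan_der a (shape_der a b c) q)"
proof -
  have smooth: "smooth_on U (\<lambda>y. shape b c y * shape_der a b c y)" for b c
    by (intro smooth_on_mult[OF U] smooth_on_shape smooth_on_shape_der)
  have "tan_der a (tan_der a shape_norm2) q =
      tan_der a (\<lambda>y. 2 * (\<Sum>b\<in>UNIV. \<Sum>c\<in>UNIV. shape b c y * shape_der a b c y)) q"
    by (rule tan_der_cong[OF _ q]) (use tan_der_shape_norm2 in auto)
  also have "\<dots> = 2 * (\<Sum>b\<in>UNIV. \<Sum>c\<in>UNIV. tan_der a (\<lambda>y. shape b c y * shape_der a b c y) q)"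
    using q smooth
    by (simp add: tan_der_cmult tan_der_sum smooth_on_sum[OF U] del: tan_der_mult)
  also have "\<dots> = 2 * (\<Sum>b\<in>UNIV. \<Sum>c\<in>UNIV.
      shape_der a b c q * shape_der a b c q + shape b c q * tan_der a (shape_der a b c) q)"
    by (simp only: tan_der_mult[OF smooth_on_shape smooth_on_shape_der q] shape_der_def[symmetric])
  finally show ?thesis .
qed

lemma tan_der_shape_der_commute:
  assumes q: "q \<in> U"
  shows "tan_der a (shape_der a b c) q = tan_der b (shape_der a a c) q
     + nu q $ a * (\<Sum>d\<in>UNIV. shape b d q * shape_der d a c q)
     - nu q $ b * (\<Sum>d\<in>UNIV. shape a d q * shape_der d a c q)
     + shape a a q * shape_sq b c q + nu q $ a * tan_der a (shape_sq b c) q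
     - (shape a b q * shape_sq a c q + nu q $ b * tan_der a (shape_sq a c) q)"
proof -
  have nu_sq: "smooth_on U (\<lambda>y. nu y $ a' * shape_sq b' c y)" for a' b'
    by (intro smooth_on_mult[OF U] smooth_on_nu_component smooth_on_shape_sq)
  have "tan_der a (shape_der a b c) q =
      tan_der a (\<lambda>y. (shape_der b a c y + nu y $ a * shape_sq b c y) - nu y $ b * shape_sq a c y) q"
    by (rule tan_der_cong[OF _ q]) (use codazzi in blast)
  also have "\<dots> = tan_der a (shape_der b a c) q
      + (shape a a q * shape_sq b c q + nu q $ a * tan_der a (shape_sq b c) q)
      - (shape a b q * shape_sq a c q + nu q $ b * tan_der a (shape_sq a c) q)"
    by (simp only: tan_der_diff[OF smooth_on_add[OF U smooth_on_shape_der nu_sq] nu_sq q]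
        tan_der_add[OF smooth_on_shape_der nu_sq q]
        tan_der_mult[OF smooth_on_nu_component smooth_on_shape_sq q] shape_def[symmetric])
  also have "tan_der a (shape_der b a c) q = tan_der b (shape_der a a c) q
      + nu q $ a * (\<Sum>d\<in>UNIV. shape b d q * shape_der d a c q)
      - nu q $ b * (\<Sum>d\<in>UNIV. shape a d q * shape_der d a c q)"
    using tan_der_commute[OF smooth_on_shape q, of a b a c]
    by (simp only: shape_der_def[symmetric] shape_der_def[of b a c, symmetric] shape_der_def[of a a c, symmetric])
  finally show ?thesis by simp
qed

lemma tan_der_trace_shape_der_soliton:
  assumes soliton: "\<forall>q\<in>U. T \<bullet> nu q = - mean_curv X nu q" and q: "q \<in> U"
  shows "(\<Sum>a\<in>UNIV. tan_der b (shape_der a a c) q) =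
    - (\<Sum>d\<in>UNIV. T $ d * shape_der b c d q) - (shape b c q * shape_norm2 q + nu q $ c * tan_der b shape_norm2 q)"
proof -
  have smooth: "smooth_on U (\<lambda>y. T $ d * shape c d y)" for d
    by (rule smooth_on_mult[OF U smooth_on_const[OF U] smooth_on_shape])
  have "(\<Sum>a\<in>UNIV. tan_der b (shape_der a a c) q) = tan_der b (\<lambda>y. \<Sum>a\<in>UNIV. shape_der a a c y) q"
    by (rule tan_der_sum[OF _ _ q, symmetric]) (auto intro: smooth_on_shape_der)
  also have "\<dots> = tan_der b (\<lambda>y. tan_der c shape_trace y - nu y $ c * shape_norm2 y) q"
    by (rule tan_der_cong[OF _ q]) (use trace_shape_der in auto)
  also have "\<dots> = tan_der b (tan_der c shape_trace) q
      - (shape b c q * shape_norm2 q + nu q $ c * tan_der b shape_norm2 q)"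
    by (simp only: tan_der_diff[OF smooth_on_tan_der[OF smooth_on_shape_trace]
          smooth_on_mult[OF U smooth_on_nu_component smooth_on_shape_norm2] q]
        tan_der_mult[OF smooth_on_nu_component smooth_on_shape_norm2 q] shape_def[symmetric])
  also have "tan_der b (tan_der c shape_trace) q = tan_der b (\<lambda>y. - (\<Sum>d\<in>UNIV. T $ d * shape c d y)) q"
    by (rule tan_der_cong[OF _ q]) (use tan_der_shape_trace_soliton[OF soliton] in auto)
  also have "\<dots> = - (\<Sum>d\<in>UNIV. tan_der b (\<lambda>y. T $ d * shape c d y) q)"
    by (simp add: tan_der_minus[OF _ q] tan_der_sum[OF _ _ q] smooth smooth_on_sum[OF U])
  also have "\<dots> = - (\<Sum>d\<in>UNIV. T $ d * shape_der b c d q)"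
    by (simp only: tan_der_cmult[OF smooth_on_shape q] shape_der_def[symmetric])
  finally show ?thesis .
qed

text \<open>Commuting tangential derivatives (Codazzi) turns the divergence of \<open>\<delta>A\<close> into the derivative of
  its trace \<open>\<delta>H\<close>, which the soliton equation expresses through \<open>T\<close>; the terms with a factor
  \<open>\<nu>\<^sub>b\<close> or \<open>\<nu>\<^sub>c\<close> are collected in brackets because they vanish after contraction with \<open>A\<close>.\<close>
lemma div_shape_der_soliton:
  assumes soliton: "\<forall>q\<in>U. T \<bullet> nu q = - mean_curv X nu q" and q: "q \<in> U"
  shows "(\<Sum>a\<in>UNIV. tan_der a (shape_der a b c) q) =
    - (\<Sum>d\<in>UNIV. T $ d * shape_der b c d q) - shape b c q * shape_norm2 q
    + (\<Sum>d\<in>UNIV. shape b d q * (\<Sum>a\<in>UNIV. nu q $ a * shape_der d a c q)) + shape_trace q * shape_sq b c q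
    - (\<Sum>a\<in>UNIV. shape a b q * shape_sq a c q)
    + nu q $ b * (- (\<Sum>a\<in>UNIV. \<Sum>d\<in>UNIV. shape a d q * shape_der d a c q)
        - (\<Sum>a\<in>UNIV. tan_der a (shape_sq a c) q))
    + nu q $ c * (- tan_der b shape_norm2 q)"
proof -
  have "(\<Sum>a\<in>UNIV. nu q $ a * (\<Sum>d\<in>UNIV. shape b d q * shape_der d a c q)) =
      (\<Sum>d\<in>UNIV. shape b d q * (\<Sum>a\<in>UNIV. nu q $ a * shape_der d a c q))"
    by (simp only: sum_distrib_left mult.left_commute[of "nu q $ _"]) (rule sum.swap)
  moreover have "(\<Sum>a\<in>UNIV. shape a a q * shape_sq b c q) = shape_trace q * shape_sq b c q"
    by (simp only: shape_trace_def sum_distrib_right)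
  moreover have "(\<Sum>a\<in>UNIV. nu q $ a * tan_der a (shape_sq b c) q) = 0"
    by (rule nu_tan_der[OF q])
  ultimately show ?thesis
    by (simp add: tan_der_shape_der_commute[OF q] sum.distrib sum_subtractf sum_distrib_left
        tan_der_trace_shape_der_soliton[OF soliton q] algebra_simps)
qed

lemma laplacian_shape_norm2:
  assumes soliton: "\<forall>q\<in>U. T \<bullet> nu q = - mean_curv X nu q" and p: "p \<in> U"
  shows "laplacian X shape_norm2 p =
    2 * (\<Sum>a\<in>UNIV. \<Sum>b\<in>UNIV. \<Sum>c\<in>UNIV. shape_der a b c p * shape_der a b c p)
    - (\<Sum>d\<in>UNIV. T $ d * tan_der d shape_norm2 p) - 2 * (shape_norm2 p * shape_norm2 p)
    - 4 * (\<Sum>a\<in>UNIV. \<Sum>c\<in>UNIV. shape_sq a c p * shape_sq a c p)"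
proof -
  have T_nu: "(\<Sum>d\<in>UNIV. T $ d * nu p $ d) = - shape_trace p"
    using soliton p mean_curv_eq_shape_trace[OF p] by (simp add: inner_vec_def)
  show ?thesis
    unfolding laplacian_eq_tan_der[OF smooth_on_shape_norm2 p] tan_der_tan_der_shape_norm2[OF p]
    by (rule simons_contraction[where n="\<lambda>a. nu p $ a" and s="\<lambda>a b. shape a b p"
          and R="\<lambda>a b. shape_sq a b p" and C="\<lambda>a b c. shape_der a b c p"
          and DC="\<lambda>a b c. tan_der a (shape_der a b c) p" and E="shape_norm2 p" and H="shape_trace p"
          and T="\<lambda>d. T $ d" and DE="\<lambda>d. tan_der d shape_norm2 p"
          and Y="\<lambda>c. - (\<Sum>a\<in>UNIV. \<Sum>d\<in>UNIV. shape a d p * shape_der d a c p)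
            - (\<Sum>a\<in>UNIV. tan_der a (shape_sq a c) p)"
          and Z="\<lambda>b. - tan_der b shape_norm2 p"])
      (rule shape_sym[OF p] shape_nu[OF p] codazzi[OF p] shape_der_sym[OF p] nu_shape_der[OF p]
        shape_sq_def shape_norm2_def tan_der_shape_norm2[OF p] div_shape_der_soliton[OF soliton p]
        T_nu)+
qed

end

theorem lemma2p2:
  fixes X :: "real^'n \<Rightarrow> real^'m" and nu :: "real^'n \<Rightarrow> real^'m"
    and U :: "(real^'n) set" and T :: "real^'m"
  assumes dim: "CARD('n) \<ge> 2" "CARD('m) = CARD('n) + 1"
    and U: "open U"
    and X_smooth: "smooth_on U X"
    and immersion: "\<forall>p\<in>U. inj (frechet_derivative X (at p))"
    and nu_smooth: "smooth_on U nu"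
    and nu_unit: "\<forall>p\<in>U. norm (nu p) = 1"
    and nu_normal: "\<forall>p\<in>U. \<forall>i. nu p \<bullet> pd i X p = 0"
    and soliton: "\<forall>p\<in>U. T \<bullet> nu p = - mean_curv X nu p"
    and p: "p \<in> U"
  shows "laplacian X (energy_density X nu) p =
           2 * sff_map_norm2 X nu p - 2 * (energy_density X nu p)^2
           - tangential_part X T p \<bullet> grad_fun X (energy_density X nu) p"
proof -
  \<comment> \<open>The identity holds in every dimension.\<close>
  interpret immersed_hypersurface X nu U
    using dim(2) U X_smooth immersion nu_smooth nu_unit nu_normal by unfold_locales auto
  have E: "\<forall>y\<in>U. energy_density X nu y = shape_norm2 y"
    using energy_density_eq_shape_norm2 by blast
  have "laplacian X (energy_density X nu) p = laplacian X shape_norm2 p"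
    by (rule laplacian_cong[OF E p])
  moreover have "tangential_part X T p \<bullet> grad_fun X (energy_density X nu) p =
      (\<Sum>d\<in>UNIV. T $ d * tan_der d shape_norm2 p)"
    using tangential_part_inner_grad_fun[OF p] tan_der_cong[OF E p] by simp
  ultimately show ?thesis
    using E p by (simp add: laplacian_shape_norm2[OF soliton p] sff_map_norm2_eq[OF p] power2_eq_square)
qed

end
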